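(* Let $n\ge3$ and let $\Phi:\mathfrak{B}([n])^{op}\to\mathbf{Gpd}$ be a contravariant functor. The restriction functor $\gamma_{n-3}:\operatorname{2lim}_{\mathfrak{B}([n])}\Phi\to\operatorname{2lim}_{\mathfrak{B}([n],n-3)}\Phi$ is an equivalence of categories, where $\mathfrak{B}([n],n-3)$ is the poset of subsets $S\subseteq[n]$ with $n-3\le|S|\le n-1$.
   Context: $[n]=\{1,\dots,n\}$; $\mathfrak{B}([n])$ is the poset of proper subsets of $[n]$ ordered by inclusion. For $U\subseteq V$, $\Phi_{U,V}:\Phi(V)\to\Phi(U)$. For a functor $\Psi:I^{op}\to\mathbf{Gpd}$ on a poset, $\operatorname{2lim}\Psi$ is the groupoid whose objects are families $(a_U,\alpha_{U,V})$ with $a_U\in\Psi(U)$ and isomorphisms $\alpha_{U,V}:\Psi_{U,V}(a_V)\to a_U$ for $U\le V$ satisfying $\alpha_{U,U}=\mathrm{id}$ and $\alpha_{U,W}=\alpha_{U,V}\circ\Psi_{U,V}(\alpha_{V,W})$, and whose morphisms are families $g_U:a_U\to b_U$ with $g_U\circ\alpha_{U,V}=\beta_{U,V}\circ\Psi_{U,V}(g_V)$. *)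

theory Defs
  imports Main
begin

record ('o,'m) cat =
  Ob  :: "'o set"
  Ar  :: "'m set"
  Dom :: "'m \<Rightarrow> 'o"
  Cod :: "'m \<Rightarrow> 'o"
  Cmp :: "'m \<Rightarrow> 'm \<Rightarrow> 'm"   (* Cmp g f = g o f *)
  Idm :: "'o \<Rightarrow> 'm"

definition category :: "('o,'m) cat \<Rightarrow> bool" where
  "category C \<longleftrightarrow>
     (\<forall>f\<in>Ar C. Dom C f \<in> Ob C \<and> Cod C f \<in> Ob C)
   \<and> (\<forall>x\<in>Ob C. Idm C x \<in> Ar C \<and> Dom C (Idm C x) = x \<and> Cod C (Idm C x) = x)
   \<and> (\<forall>f\<in>Ar C. \<forall>g\<in>Ar C. Cod C f = Dom C g \<longrightarrow>
        Cmp C g f \<in> Ar C \<and> Dom C (Cmp C g f) = Dom C f \<and> Cod C (Cmp C g f) = Cod C g)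
   \<and> (\<forall>f\<in>Ar C. \<forall>g\<in>Ar C. \<forall>h\<in>Ar C. Cod C f = Dom C g \<longrightarrow> Cod C g = Dom C h \<longrightarrow>
        Cmp C h (Cmp C g f) = Cmp C (Cmp C h g) f)
   \<and> (\<forall>f\<in>Ar C. Cmp C (Idm C (Cod C f)) f = f \<and> Cmp C f (Idm C (Dom C f)) = f)"

definition iso_arr :: "('o,'m) cat \<Rightarrow> 'm \<Rightarrow> bool" where
  "iso_arr C f \<longleftrightarrow> f \<in> Ar C \<and> (\<exists>g\<in>Ar C. Dom C g = Cod C f \<and> Cod C g = Dom C f
      \<and> Cmp C g f = Idm C (Dom C f) \<and> Cmp C f g = Idm C (Cod C f))"

definition groupoid :: "('o,'m) cat \<Rightarrow> bool" where
  "groupoid C \<longleftrightarrow> category C \<and> (\<forall>f\<in>Ar C. iso_arr C f)"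

type_synonym ('o,'m,'p,'n) ftor = "('o \<Rightarrow> 'p) \<times> ('m \<Rightarrow> 'n)"

definition is_functor :: "('o,'m) cat \<Rightarrow> ('p,'n) cat \<Rightarrow> ('o,'m,'p,'n) ftor \<Rightarrow> bool" where
  "is_functor C D F \<longleftrightarrow> category C \<and> category D
   \<and> (\<forall>x\<in>Ob C. fst F x \<in> Ob D)
   \<and> (\<forall>f\<in>Ar C. snd F f \<in> Ar D \<and> Dom D (snd F f) = fst F (Dom C f)
                                 \<and> Cod D (snd F f) = fst F (Cod C f))
   \<and> (\<forall>f\<in>Ar C. \<forall>g\<in>Ar C. Cod C f = Dom C g \<longrightarrow>
        snd F (Cmp C g f) = Cmp D (snd F g) (snd F f))
   \<and> (\<forall>x\<in>Ob C. snd F (Idm C x) = Idm D (fst F x))"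

definition id_ftor :: "('o,'m,'o,'m) ftor" where
  "id_ftor = (\<lambda>x. x, \<lambda>f. f)"

definition comp_ftor :: "('p,'n,'q,'k) ftor \<Rightarrow> ('o,'m,'p,'n) ftor \<Rightarrow> ('o,'m,'q,'k) ftor" where
  "comp_ftor G F = (fst G \<circ> fst F, snd G \<circ> snd F)"

definition ftor_eq :: "('o,'m) cat \<Rightarrow> ('o,'m,'p,'n) ftor \<Rightarrow> ('o,'m,'p,'n) ftor \<Rightarrow> bool" where
  "ftor_eq C F G \<longleftrightarrow> (\<forall>x\<in>Ob C. fst F x = fst G x) \<and> (\<forall>f\<in>Ar C. snd F f = snd G f)"

definition nat_iso :: "('o,'m) cat \<Rightarrow> ('p,'n) cat \<Rightarrow> ('o,'m,'p,'n) ftor \<Rightarrow> ('o,'m,'p,'n) ftor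
                       \<Rightarrow> ('o \<Rightarrow> 'n) \<Rightarrow> bool" where
  "nat_iso C D F G eta \<longleftrightarrow> is_functor C D F \<and> is_functor C D G
   \<and> (\<forall>x\<in>Ob C. iso_arr D (eta x) \<and> Dom D (eta x) = fst F x \<and> Cod D (eta x) = fst G x)
   \<and> (\<forall>f\<in>Ar C. Cmp D (eta (Cod C f)) (snd F f) = Cmp D (snd G f) (eta (Dom C f)))"

definition cat_equivalence :: "('o,'m) cat \<Rightarrow> ('p,'n) cat \<Rightarrow> ('o,'m,'p,'n) ftor \<Rightarrow> bool" where
  "cat_equivalence C D F \<longleftrightarrow> is_functor C D F \<and>
     (\<exists>G :: ('p,'n,'o,'m) ftor. is_functor D C G
        \<and> (\<exists>eta. nat_iso C C id_ftor (comp_ftor G F) eta)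
        \<and> (\<exists>eps. nat_iso D D (comp_ftor F G) id_ftor eps))"

text \<open>Phi U is the groupoid at U; PhiR U V = Phi_{U,V} : Phi V -> Phi U for U <= V.\<close>
definition contra_gpd_functor ::
  "nat set set \<Rightarrow> (nat set \<Rightarrow> ('o,'m) cat) \<Rightarrow> (nat set \<Rightarrow> nat set \<Rightarrow> ('o,'m,'o,'m) ftor) \<Rightarrow> bool" where
  "contra_gpd_functor P Phi PhiR \<longleftrightarrow>
     (\<forall>U\<in>P. groupoid (Phi U))
   \<and> (\<forall>U\<in>P. \<forall>V\<in>P. U \<subseteq> V \<longrightarrow> is_functor (Phi V) (Phi U) (PhiR U V))
   \<and> (\<forall>U\<in>P. ftor_eq (Phi U) (PhiR U U) id_ftor)
   \<and> (\<forall>U\<in>P. \<forall>V\<in>P. \<forall>W\<in>P. U \<subseteq> V \<longrightarrow> V \<subseteq> W \<longrightarrow>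
        ftor_eq (Phi W) (PhiR U W) (comp_ftor (PhiR U V) (PhiR V W)))"

type_synonym ('o,'m) lobj = "(nat set \<Rightarrow> 'o) \<times> (nat set \<Rightarrow> nat set \<Rightarrow> 'm)"
type_synonym ('o,'m) larr = "('o,'m) lobj \<times> ('o,'m) lobj \<times> (nat set \<Rightarrow> 'm)"

definition lim_obj ::
  "nat set set \<Rightarrow> (nat set \<Rightarrow> ('o,'m) cat) \<Rightarrow> (nat set \<Rightarrow> nat set \<Rightarrow> ('o,'m,'o,'m) ftor)
   \<Rightarrow> ('o,'m) lobj \<Rightarrow> bool" where
  "lim_obj P Phi PhiR x \<longleftrightarrow> (case x of (a, \<alpha>) \<Rightarrow>
      (\<forall>U\<in>P. a U \<in> Ob (Phi U))
    \<and> (\<forall>U\<in>P. \<forall>V\<in>P. U \<subseteq> V \<longrightarrow> \<alpha> U V \<in> Ar (Phi U)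
          \<and> Dom (Phi U) (\<alpha> U V) = fst (PhiR U V) (a V) \<and> Cod (Phi U) (\<alpha> U V) = a U)
    \<and> (\<forall>U\<in>P. \<alpha> U U = Idm (Phi U) (a U))
    \<and> (\<forall>U\<in>P. \<forall>V\<in>P. \<forall>W\<in>P. U \<subseteq> V \<longrightarrow> V \<subseteq> W \<longrightarrow>
          \<alpha> U W = Cmp (Phi U) (\<alpha> U V) (snd (PhiR U V) (\<alpha> V W)))
    \<and> (\<forall>U. U \<notin> P \<longrightarrow> a U = undefined)
    \<and> (\<forall>U V. \<not> (U \<in> P \<and> V \<in> P \<and> U \<subseteq> V) \<longrightarrow> \<alpha> U V = undefined))"

definition lim_arr ::
  "nat set set \<Rightarrow> (nat set \<Rightarrow> ('o,'m) cat) \<Rightarrow> (nat set \<Rightarrow> nat set \<Rightarrow> ('o,'m,'o,'m) ftor)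
   \<Rightarrow> ('o,'m) larr \<Rightarrow> bool" where
  "lim_arr P Phi PhiR f \<longleftrightarrow> (case f of ((a, \<alpha>), (b, \<beta>), g) \<Rightarrow>
      lim_obj P Phi PhiR (a, \<alpha>) \<and> lim_obj P Phi PhiR (b, \<beta>)
    \<and> (\<forall>U\<in>P. g U \<in> Ar (Phi U) \<and> Dom (Phi U) (g U) = a U \<and> Cod (Phi U) (g U) = b U)
    \<and> (\<forall>U\<in>P. \<forall>V\<in>P. U \<subseteq> V \<longrightarrow>
          Cmp (Phi U) (g U) (\<alpha> U V) = Cmp (Phi U) (\<beta> U V) (snd (PhiR U V) (g V)))
    \<and> (\<forall>U. U \<notin> P \<longrightarrow> g U = undefined))"

definition twolim ::
  "nat set set \<Rightarrow> (nat set \<Rightarrow> ('o,'m) cat) \<Rightarrow> (nat set \<Rightarrow> nat set \<Rightarrow> ('o,'m,'o,'m) ftor)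
   \<Rightarrow> (('o,'m) lobj, ('o,'m) larr) cat" where
  "twolim P Phi PhiR =
     \<lparr> Ob = {x. lim_obj P Phi PhiR x},
       Ar = {f. lim_arr P Phi PhiR f},
       Dom = (\<lambda>f. fst f),
       Cod = (\<lambda>f. fst (snd f)),
       Cmp = (\<lambda>k f. (fst f, fst (snd k),
                      \<lambda>U. if U \<in> P then Cmp (Phi U) (snd (snd k) U) (snd (snd f) U) else undefined)),
       Idm = (\<lambda>x. (x, x, \<lambda>U. if U \<in> P then Idm (Phi U) (fst x U) else undefined)) \<rparr>"

definition restr_obj :: "nat set set \<Rightarrow> ('o,'m) lobj \<Rightarrow> ('o,'m) lobj" where
  "restr_obj Q x = (\<lambda>U. if U \<in> Q then fst x U else undefined,
                    \<lambda>U V. if U \<in> Q \<and> V \<in> Q \<and> U \<subseteq> V then snd x U V else undefined)"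

definition restr_ftor :: "nat set set \<Rightarrow> (('o,'m) lobj, ('o,'m) larr, ('o,'m) lobj, ('o,'m) larr) ftor" where
  "restr_ftor Q = (restr_obj Q,
     \<lambda>f. (restr_obj Q (fst f), restr_obj Q (fst (snd f)),
          \<lambda>U. if U \<in> Q then snd (snd f) U else undefined))"

definition Bn :: "nat \<Rightarrow> nat set set" where
  "Bn n = {S. S \<subset> {1..n}}"

definition Bnk :: "nat \<Rightarrow> nat \<Rightarrow> nat set set" where
  "Bnk n k = {S. S \<subseteq> {1..n} \<and> k \<le> card S \<and> card S \<le> n - 1}"

end

theory Submission
  imports Defs
begin

text \<open>
  A quasi-inverse of the restriction functor is obtained by gluing. Let \<open>Q\<close> be the proper
  subsets of size at least \<open>n - 3\<close>, and for a proper subset \<open>U\<close> let \<open>Q_above U\<close> be the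
  members of \<open>Q\<close> containing \<open>U\<close>. An object \<open>x\<close> of the 2-limit over \<open>Q\<close> restricts to
  descent data \<open>V \<mapsto> \<Phi>\<^sub>U\<^sub>V(x\<^sub>V)\<close> on \<open>Q_above U\<close> in the groupoid \<open>\<Phi>(U)\<close>. Two members
  \<open>V, W\<close> of \<open>Q_above U\<close> with \<open>V \<inter> W \<in> Q\<close> are compared through \<open>V \<inter> W\<close>; routing
  through the coatoms \<open>N - {a}\<close> (\<open>a \<notin> U\<close>) this yields a compatible family of isomorphisms
  from all \<open>\<Phi>\<^sub>U\<^sub>V(x\<^sub>V)\<close> to a single object, the component of the glued object at \<open>U\<close>.
  This is where \<open>n - 3\<close> enters: the sets \<open>N - {a, b, c}\<close> still lie in \<open>Q\<close>, so the
  transports through coatoms satisfy the cocycle condition.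

  Between two such families, an arrow compatible with a given map of descent data is unique
  because the families consist of isomorphisms, and it exists because any two members of
  \<open>Q_above U\<close> are joined by a zigzag of inclusions. The restriction arrows of the glued
  object, the action on arrows, the unit and the counit are all defined as such arrows, and
  the required identities follow from the uniqueness.
\<close>

definition arr :: "('o,'m) cat \<Rightarrow> 'm \<Rightarrow> 'o \<Rightarrow> 'o \<Rightarrow> bool" where
  "arr C f a b \<longleftrightarrow> f \<in> Ar C \<and> Dom C f = a \<and> Cod C f = b"

lemma cat_comp: "category C \<Longrightarrow> arr C f a b \<Longrightarrow> arr C g b c \<Longrightarrow> arr C (Cmp C g f) a c"
  unfolding category_def arr_def by metis

lemma cat_assoc: "category C \<Longrightarrow> arr C f a b \<Longrightarrow> arr C g b c \<Longrightarrow> arr C h c d \<Longrightarrow>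
   Cmp C h (Cmp C g f) = Cmp C (Cmp C h g) f"
  unfolding category_def arr_def by metis

lemma cat_id: "category C \<Longrightarrow> a \<in> Ob C \<Longrightarrow> arr C (Idm C a) a a"
  unfolding category_def arr_def by metis

lemma cat_idl: "category C \<Longrightarrow> arr C f a b \<Longrightarrow> Cmp C (Idm C b) f = f"
  unfolding category_def arr_def by metis

lemma cat_idr: "category C \<Longrightarrow> arr C f a b \<Longrightarrow> Cmp C f (Idm C a) = f"
  unfolding category_def arr_def by metis

lemma groupoid_category: "groupoid C \<Longrightarrow> category C"
  by (simp add: groupoid_def)

definition inv_arr :: "('o,'m) cat \<Rightarrow> 'm \<Rightarrow> 'm" where
  "inv_arr C f = (SOME g. arr C g (Cod C f) (Dom C f)
     \<and> Cmp C g f = Idm C (Dom C f) \<and> Cmp C f g = Idm C (Cod C f))"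

lemma inv_arr:
  assumes "groupoid C" "arr C f a b"
  shows "arr C (inv_arr C f) b a \<and> Cmp C (inv_arr C f) f = Idm C a \<and> Cmp C f (inv_arr C f) = Idm C b"
proof -
  have "iso_arr C f" using assms unfolding groupoid_def arr_def by blast
  then have "\<exists>g. arr C g (Cod C f) (Dom C f) \<and> Cmp C g f = Idm C (Dom C f) \<and> Cmp C f g = Idm C (Cod C f)"
    unfolding iso_arr_def arr_def by blast
  from someI_ex[OF this] show ?thesis using assms(2) unfolding inv_arr_def arr_def by blast
qed

lemma groupoid_cancel_right:
  assumes "groupoid C" "arr C f a b" "arr C g b c" "arr C h b c" "Cmp C g f = Cmp C h f"
  shows "g = h"
proof -
  have c: "category C" using assms(1) groupoid_category by blast
  note i = inv_arr[OF assms(1,2)]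
  have "g = Cmp C g (Cmp C f (inv_arr C f))" using i cat_idr[OF c assms(3)] by simp
  also have "\<dots> = Cmp C (Cmp C g f) (inv_arr C f)" using cat_assoc[OF c _ assms(2,3)] i by blast
  also have "\<dots> = Cmp C (Cmp C h f) (inv_arr C f)" using assms(5) by simp
  also have "\<dots> = Cmp C h (Cmp C f (inv_arr C f))" using cat_assoc[OF c _ assms(2,4)] i by metis
  also have "\<dots> = h" using i cat_idr[OF c assms(4)] by simp
  finally show ?thesis .
qed

lemma groupoid_cancel_left:
  assumes "groupoid C" "arr C f b c" "arr C g a b" "arr C h a b" "Cmp C f g = Cmp C f h"
  shows "g = h"
proof -
  have c: "category C" using assms(1) groupoid_category by blast
  note i = inv_arr[OF assms(1,2)]
  have "g = Cmp C (Cmp C (inv_arr C f) f) g" using i cat_idl[OF c assms(3)] by simp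
  also have "\<dots> = Cmp C (inv_arr C f) (Cmp C f g)" using cat_assoc[OF c assms(3,2)] i by metis
  also have "\<dots> = Cmp C (inv_arr C f) (Cmp C f h)" using assms(5) by simp
  also have "\<dots> = Cmp C (Cmp C (inv_arr C f) f) h" using cat_assoc[OF c assms(4,2)] i by metis
  also have "\<dots> = h" using i cat_idl[OF c assms(4)] by simp
  finally show ?thesis .
qed

lemma functor_ob: "is_functor C D F \<Longrightarrow> a \<in> Ob C \<Longrightarrow> fst F a \<in> Ob D"
  unfolding is_functor_def by blast

lemma functor_arr: "is_functor C D F \<Longrightarrow> arr C f a b \<Longrightarrow> arr D (snd F f) (fst F a) (fst F b)"
  unfolding is_functor_def arr_def by blast

lemma functor_comp: "is_functor C D F \<Longrightarrow> arr C f a b \<Longrightarrow> arr C g b c \<Longrightarrow>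
   snd F (Cmp C g f) = Cmp D (snd F g) (snd F f)"
  unfolding is_functor_def arr_def by metis

lemma functor_id: "is_functor C D F \<Longrightarrow> a \<in> Ob C \<Longrightarrow> snd F (Idm C a) = Idm D (fst F a)"
  unfolding is_functor_def by blast

lemma id_ftor_functor: "category C \<Longrightarrow> is_functor C C id_ftor"
  unfolding is_functor_def id_ftor_def category_def by auto

lemma comp_ftor_functor: "is_functor C D F \<Longrightarrow> is_functor D E G \<Longrightarrow> is_functor C E (comp_ftor G F)"
  unfolding is_functor_def comp_ftor_def by (auto; metis)

lemma nat_iso_groupoidI:
  assumes "is_functor C D F" "is_functor C D G" "groupoid D"
    and "\<And>x. x \<in> Ob C \<Longrightarrow> arr D (eta x) (fst F x) (fst G x)"
    and "\<And>f. f \<in> Ar C \<Longrightarrow> Cmp D (eta (Cod C f)) (snd F f) = Cmp D (snd G f) (eta (Dom C f))"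
  shows "nat_iso C D F G eta"
  using assms unfolding nat_iso_def groupoid_def arr_def by blast

lemma square_paste:
  assumes C: "category C" and F: "is_functor D C F"
    and p: "arr D p x y" "arr C p' x' y'" and q: "arr D q y z" "arr C q' y' z'"
    and ax: "arr C ax (fst F x) x'" and ay: "arr C ay (fst F y) y'" and az: "arr C az (fst F z) z'"
    and sp: "Cmp C p' ax = Cmp C ay (snd F p)" and sq: "Cmp C q' ay = Cmp C az (snd F q)"
  shows "Cmp C (Cmp C q' p') ax = Cmp C az (snd F (Cmp D q p))"
proof -
  have Fp: "arr C (snd F p) (fst F x) (fst F y)" and Fq: "arr C (snd F q) (fst F y) (fst F z)"
    using functor_arr[OF F p(1)] functor_arr[OF F q(1)] .
  have "Cmp C (Cmp C q' p') ax = Cmp C q' (Cmp C ay (snd F p))"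
    using cat_assoc[OF C ax p(2) q(2)] sp by simp
  also have "\<dots> = Cmp C (Cmp C az (snd F q)) (snd F p)"
    using cat_assoc[OF C Fp ay q(2)] sq by simp
  also have "\<dots> = Cmp C az (snd F (Cmp D q p))"
    using cat_assoc[OF C Fp Fq az] functor_comp[OF F p(1) q(1)] by simp
  finally show ?thesis .
qed

lemma square_inverse:
  assumes C: "groupoid C" and D: "groupoid D" and F: "is_functor D C F"
    and p: "arr D p x y" "arr C p' x' y'"
    and ax: "arr C ax (fst F x) x'" and ay: "arr C ay (fst F y) y'"
    and sp: "Cmp C p' ax = Cmp C ay (snd F p)"
  shows "Cmp C (inv_arr C p') ay = Cmp C ax (snd F (inv_arr D p))"
proof -
  have c: "category C" using groupoid_category[OF C] .
  note i = inv_arr[OF D p(1)] and i' = inv_arr[OF C p(2)]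
  have Fp: "arr C (snd F p) (fst F x) (fst F y)" and Fi: "arr C (snd F (inv_arr D p)) (fst F y) (fst F x)"
    using functor_arr[OF F p(1)] functor_arr[OF F i[THEN conjunct1]] .
  have y: "y \<in> Ob D"
    using p(1) groupoid_category[OF D] unfolding category_def arr_def by blast
  have FpFi: "Cmp C (snd F p) (snd F (inv_arr D p)) = Idm C (fst F y)"
    using functor_comp[OF F i[THEN conjunct1] p(1)] i functor_id[OF F y] by simp
  have "Cmp C p' (Cmp C (inv_arr C p') ay) = ay"
    using cat_assoc[OF c ay _ p(2)] i' cat_idl[OF c ay] by metis
  also have "\<dots> = Cmp C (Cmp C ay (snd F p)) (snd F (inv_arr D p))"
    using cat_assoc[OF c Fi Fp ay] FpFi cat_idr[OF c ay] by simp
  also have "\<dots> = Cmp C p' (Cmp C ax (snd F (inv_arr D p)))"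
    using cat_assoc[OF c Fi ax p(2)] sp by simp
  finally show ?thesis
    using groupoid_cancel_left[OF C p(2) cat_comp[OF c ay] cat_comp[OF c Fi ax]] i' by blast
qed

definition comparison ::
  "('o,'m) cat \<Rightarrow> 'i set \<Rightarrow> 'o \<Rightarrow> ('i \<Rightarrow> 'm) \<Rightarrow> 'o \<Rightarrow> ('i \<Rightarrow> 'm) \<Rightarrow> ('i \<Rightarrow> 'm) \<Rightarrow> 'm" where
  "comparison C S a \<gamma> d \<delta> \<phi> = (THE h. arr C h a d \<and> (\<forall>V\<in>S. Cmp C h (\<gamma> V) = Cmp C (\<delta> V) (\<phi> V)))"

lemma comparison_eq:
  assumes "groupoid C" "V\<^sub>0 \<in> S" "arr C (\<gamma> V\<^sub>0) s\<^sub>0 a"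
    and h: "arr C h a d" "\<forall>V\<in>S. Cmp C h (\<gamma> V) = Cmp C (\<delta> V) (\<phi> V)"
  shows "comparison C S a \<gamma> d \<delta> \<phi> = h"
  unfolding comparison_def
proof (rule the_equality)
  fix h' assume h': "arr C h' a d \<and> (\<forall>V\<in>S. Cmp C h' (\<gamma> V) = Cmp C (\<delta> V) (\<phi> V))"
  then have "Cmp C h' (\<gamma> V\<^sub>0) = Cmp C h (\<gamma> V\<^sub>0)" using h assms(2) by metis
  then show "h' = h" using groupoid_cancel_right[OF assms(1,3)] h' h by blast
qed (use h in blast)

lemma comparison:
  assumes "groupoid C" "V\<^sub>0 \<in> S" "arr C (\<gamma> V\<^sub>0) s\<^sub>0 a"
    and "\<exists>h. arr C h a d \<and> (\<forall>V\<in>S. Cmp C h (\<gamma> V) = Cmp C (\<delta> V) (\<phi> V))"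
  shows "arr C (comparison C S a \<gamma> d \<delta> \<phi>) a d"
    and "\<forall>V\<in>S. Cmp C (comparison C S a \<gamma> d \<delta> \<phi>) (\<gamma> V) = Cmp C (\<delta> V) (\<phi> V)"
proof -
  obtain h where "arr C h a d" "\<forall>V\<in>S. Cmp C h (\<gamma> V) = Cmp C (\<delta> V) (\<phi> V)"
    using assms(4) by blast
  with comparison_eq[where \<gamma>=\<gamma>, OF assms(1-3) this] show "arr C (comparison C S a \<gamma> d \<delta> \<phi>) a d"
    and "\<forall>V\<in>S. Cmp C (comparison C S a \<gamma> d \<delta> \<phi>) (\<gamma> V) = Cmp C (\<delta> V) (\<phi> V)"
    by simp_all
qed

section \<open>The 2-limit of a presheaf of groupoids\<close>

locale gpd_presheaf =
  fixes R :: "nat set set" and Phi :: "nat set \<Rightarrow> ('o,'m) cat"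
    and PhiR :: "nat set \<Rightarrow> nat set \<Rightarrow> ('o,'m,'o,'m) ftor"
  assumes presheaf: "contra_gpd_functor R Phi PhiR"
begin

lemmas presheaf_unfolded = presheaf[unfolded contra_gpd_functor_def]

lemma groupoid_at: "U \<in> R \<Longrightarrow> groupoid (Phi U)"
  using presheaf_unfolded[THEN conjunct1] by blast

lemma category_at: "U \<in> R \<Longrightarrow> category (Phi U)"
  using groupoid_at groupoid_category by blast

lemma res_functor: "U \<in> R \<Longrightarrow> V \<in> R \<Longrightarrow> U \<subseteq> V \<Longrightarrow> is_functor (Phi V) (Phi U) (PhiR U V)"
  using presheaf_unfolded[THEN conjunct2, THEN conjunct1] by blast

lemma res_id: "U \<in> R \<Longrightarrow> ftor_eq (Phi U) (PhiR U U) id_ftor"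
  using presheaf_unfolded[THEN conjunct2, THEN conjunct2, THEN conjunct1] by blast

lemma res_comp: "\<lbrakk>U \<in> R; V \<in> R; W \<in> R; U \<subseteq> V; V \<subseteq> W\<rbrakk>
   \<Longrightarrow> ftor_eq (Phi W) (PhiR U W) (comp_ftor (PhiR U V) (PhiR V W))"
  using presheaf_unfolded[THEN conjunct2, THEN conjunct2, THEN conjunct2] by blast

lemma res_id_ob: "U \<in> R \<Longrightarrow> a \<in> Ob (Phi U) \<Longrightarrow> fst (PhiR U U) a = a"
  using res_id[of U] unfolding ftor_eq_def id_ftor_def by simp

lemma res_id_arr: "U \<in> R \<Longrightarrow> arr (Phi U) f a b \<Longrightarrow> snd (PhiR U U) f = f"
  using res_id[of U] unfolding ftor_eq_def id_ftor_def arr_def by simp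

lemma res_comp_ob:
  "\<lbrakk>U \<in> R; V \<in> R; W \<in> R; U \<subseteq> V; V \<subseteq> W; a \<in> Ob (Phi W)\<rbrakk>
   \<Longrightarrow> fst (PhiR U W) a = fst (PhiR U V) (fst (PhiR V W) a)"
  using res_comp[of U V W] unfolding ftor_eq_def comp_ftor_def by simp

lemma res_comp_arr:
  "\<lbrakk>U \<in> R; V \<in> R; W \<in> R; U \<subseteq> V; V \<subseteq> W; arr (Phi W) f a b\<rbrakk>
   \<Longrightarrow> snd (PhiR U W) f = snd (PhiR U V) (snd (PhiR V W) f)"
  using res_comp[of U V W] unfolding ftor_eq_def comp_ftor_def arr_def by simp

lemma gpd_presheaf_subset: "Q \<subseteq> R \<Longrightarrow> gpd_presheaf Q Phi PhiR"
  unfolding gpd_presheaf_def contra_gpd_functor_def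
  using groupoid_at res_functor res_id res_comp by (meson subsetD)

abbreviation "Lim \<equiv> twolim R Phi PhiR"

lemma lim_obj_iff: "lim_obj R Phi PhiR x \<longleftrightarrow>
      (\<forall>U\<in>R. fst x U \<in> Ob (Phi U))
    \<and> (\<forall>U\<in>R. \<forall>V\<in>R. U \<subseteq> V \<longrightarrow> arr (Phi U) (snd x U V) (fst (PhiR U V) (fst x V)) (fst x U))
    \<and> (\<forall>U\<in>R. snd x U U = Idm (Phi U) (fst x U))
    \<and> (\<forall>U\<in>R. \<forall>V\<in>R. \<forall>W\<in>R. U \<subseteq> V \<longrightarrow> V \<subseteq> W \<longrightarrow>
          snd x U W = Cmp (Phi U) (snd x U V) (snd (PhiR U V) (snd x V W)))
    \<and> (\<forall>U. U \<notin> R \<longrightarrow> fst x U = undefined)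
    \<and> (\<forall>U V. \<not> (U \<in> R \<and> V \<in> R \<and> U \<subseteq> V) \<longrightarrow> snd x U V = undefined)"
  by (cases x) (simp add: lim_obj_def arr_def)

lemma lim_arr_iff: "lim_arr R Phi PhiR f \<longleftrightarrow>
      lim_obj R Phi PhiR (fst f) \<and> lim_obj R Phi PhiR (fst (snd f))
    \<and> (\<forall>U\<in>R. arr (Phi U) (snd (snd f) U) (fst (fst f) U) (fst (fst (snd f)) U))
    \<and> (\<forall>U\<in>R. \<forall>V\<in>R. U \<subseteq> V \<longrightarrow> Cmp (Phi U) (snd (snd f) U) (snd (fst f) U V)
          = Cmp (Phi U) (snd (fst (snd f)) U V) (snd (PhiR U V) (snd (snd f) V)))
    \<and> (\<forall>U. U \<notin> R \<longrightarrow> snd (snd f) U = undefined)"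
  by (cases f) (auto simp add: lim_arr_def arr_def split: prod.splits)

lemma lim_obj_ob: "lim_obj R Phi PhiR x \<Longrightarrow> U \<in> R \<Longrightarrow> fst x U \<in> Ob (Phi U)"
  using lim_obj_iff[THEN iffD1, THEN conjunct1] by blast

lemma lim_obj_arr: "lim_obj R Phi PhiR x \<Longrightarrow> U \<in> R \<Longrightarrow> V \<in> R \<Longrightarrow> U \<subseteq> V \<Longrightarrow>
   arr (Phi U) (snd x U V) (fst (PhiR U V) (fst x V)) (fst x U)"
  using lim_obj_iff[THEN iffD1, THEN conjunct2, THEN conjunct1] by blast

lemma lim_obj_id: "lim_obj R Phi PhiR x \<Longrightarrow> U \<in> R \<Longrightarrow> snd x U U = Idm (Phi U) (fst x U)"
  using lim_obj_iff[THEN iffD1, THEN conjunct2, THEN conjunct2, THEN conjunct1] by blast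

lemma lim_obj_cocycle: "lim_obj R Phi PhiR x \<Longrightarrow> U \<in> R \<Longrightarrow> V \<in> R \<Longrightarrow> W \<in> R \<Longrightarrow> U \<subseteq> V \<Longrightarrow> V \<subseteq> W \<Longrightarrow>
   snd x U W = Cmp (Phi U) (snd x U V) (snd (PhiR U V) (snd x V W))"
  using lim_obj_iff[THEN iffD1, THEN conjunct2, THEN conjunct2, THEN conjunct2, THEN conjunct1] by blast

lemma lim_objI:
  "\<lbrakk>\<And>U. U\<in>R \<Longrightarrow> fst x U \<in> Ob (Phi U);
    \<And>U V. U\<in>R \<Longrightarrow> V\<in>R \<Longrightarrow> U \<subseteq> V \<Longrightarrow> arr (Phi U) (snd x U V) (fst (PhiR U V) (fst x V)) (fst x U);
    \<And>U. U\<in>R \<Longrightarrow> snd x U U = Idm (Phi U) (fst x U);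
    \<And>U V W. U\<in>R \<Longrightarrow> V\<in>R \<Longrightarrow> W\<in>R \<Longrightarrow> U \<subseteq> V \<Longrightarrow> V \<subseteq> W \<Longrightarrow>
       snd x U W = Cmp (Phi U) (snd x U V) (snd (PhiR U V) (snd x V W));
    \<And>U. U \<notin> R \<Longrightarrow> fst x U = undefined;
    \<And>U V. \<not> (U \<in> R \<and> V \<in> R \<and> U \<subseteq> V) \<Longrightarrow> snd x U V = undefined\<rbrakk>
   \<Longrightarrow> lim_obj R Phi PhiR x"
  unfolding lim_obj_iff by blast

lemma lim_arr_dom: "lim_arr R Phi PhiR f \<Longrightarrow> lim_obj R Phi PhiR (fst f)"
  using lim_arr_iff[THEN iffD1, THEN conjunct1] by blast

lemma lim_arr_cod: "lim_arr R Phi PhiR f \<Longrightarrow> lim_obj R Phi PhiR (fst (snd f))"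
  using lim_arr_iff[THEN iffD1, THEN conjunct2, THEN conjunct1] by blast

lemma lim_arr_arr: "lim_arr R Phi PhiR f \<Longrightarrow> U \<in> R \<Longrightarrow>
   arr (Phi U) (snd (snd f) U) (fst (fst f) U) (fst (fst (snd f)) U)"
  using lim_arr_iff[THEN iffD1, THEN conjunct2, THEN conjunct2, THEN conjunct1] by blast

lemma lim_arr_nat: "lim_arr R Phi PhiR f \<Longrightarrow> U \<in> R \<Longrightarrow> V \<in> R \<Longrightarrow> U \<subseteq> V \<Longrightarrow>
   Cmp (Phi U) (snd (snd f) U) (snd (fst f) U V)
     = Cmp (Phi U) (snd (fst (snd f)) U V) (snd (PhiR U V) (snd (snd f) V))"
  using lim_arr_iff[THEN iffD1, THEN conjunct2, THEN conjunct2, THEN conjunct2, THEN conjunct1] by blast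

lemma lim_arr_undefined: "lim_arr R Phi PhiR f \<Longrightarrow> U \<notin> R \<Longrightarrow> snd (snd f) U = undefined"
  using lim_arr_iff[THEN iffD1, THEN conjunct2, THEN conjunct2, THEN conjunct2, THEN conjunct2] by blast

lemma lim_arrI:
  "\<lbrakk>lim_obj R Phi PhiR (fst f); lim_obj R Phi PhiR (fst (snd f));
    \<And>U. U\<in>R \<Longrightarrow> arr (Phi U) (snd (snd f) U) (fst (fst f) U) (fst (fst (snd f)) U);
    \<And>U V. U\<in>R \<Longrightarrow> V\<in>R \<Longrightarrow> U \<subseteq> V \<Longrightarrow> Cmp (Phi U) (snd (snd f) U) (snd (fst f) U V)
       = Cmp (Phi U) (snd (fst (snd f)) U V) (snd (PhiR U V) (snd (snd f) V));
    \<And>U. U \<notin> R \<Longrightarrow> snd (snd f) U = undefined\<rbrakk>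
   \<Longrightarrow> lim_arr R Phi PhiR f"
  unfolding lim_arr_iff by blast

lemma twolim_simps:
  "Ob Lim = {x. lim_obj R Phi PhiR x}" "Ar Lim = {f. lim_arr R Phi PhiR f}"
  "Dom Lim f = fst f" "Cod Lim f = fst (snd f)"
  "Cmp Lim k f = (fst f, fst (snd k),
     \<lambda>U. if U \<in> R then Cmp (Phi U) (snd (snd k) U) (snd (snd f) U) else undefined)"
  "Idm Lim x = (x, x, \<lambda>U. if U \<in> R then Idm (Phi U) (fst x U) else undefined)"
  by (simp_all add: twolim_def)

lemma lim_arr_comp:
  assumes f: "lim_arr R Phi PhiR f" and g: "lim_arr R Phi PhiR g" and e: "fst (snd f) = fst g"
  shows "lim_arr R Phi PhiR (Cmp Lim g f)"
proof -
  obtain x y p where fx: "f = (x, y, p)" by (cases f) auto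
  obtain z q where gx: "g = (y, z, q)" using e fx by (cases g) auto
  have x: "lim_obj R Phi PhiR x" and y: "lim_obj R Phi PhiR y" and z: "lim_obj R Phi PhiR z"
    using lim_arr_dom[OF f] lim_arr_cod[OF f] lim_arr_cod[OF g] fx gx by auto
  have pa: "\<And>U. U\<in>R \<Longrightarrow> arr (Phi U) (p U) (fst x U) (fst y U)"
    and qa: "\<And>U. U\<in>R \<Longrightarrow> arr (Phi U) (q U) (fst y U) (fst z U)"
    using lim_arr_arr[OF f] lim_arr_arr[OF g] fx gx by auto
  have "Cmp (Phi U) (Cmp (Phi U) (q U) (p U)) (snd x U V) =
        Cmp (Phi U) (snd z U V) (snd (PhiR U V) (Cmp (Phi V) (q V) (p V)))"
    if U: "U \<in> R" "V \<in> R" "U \<subseteq> V" for U V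
  proof -
    have "Cmp (Phi U) (p U) (snd x U V) = Cmp (Phi U) (snd y U V) (snd (PhiR U V) (p V))"
      and "Cmp (Phi U) (q U) (snd y U V) = Cmp (Phi U) (snd z U V) (snd (PhiR U V) (q V))"
      using lim_arr_nat[OF f U] lim_arr_nat[OF g U] fx gx by auto
    then show ?thesis
      using square_paste[OF category_at[OF U(1)] res_functor[OF U] pa[OF U(2)] pa[OF U(1)]
          qa[OF U(2)] qa[OF U(1)] lim_obj_arr[OF x U] lim_obj_arr[OF y U] lim_obj_arr[OF z U]]
      by blast
  qed
  then show ?thesis
    by (intro lim_arrI) (auto simp: fx gx twolim_simps x z intro: cat_comp[OF category_at pa qa])
qed

lemma lim_arr_id:
  assumes x: "lim_obj R Phi PhiR x" shows "lim_arr R Phi PhiR (Idm Lim x)"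
proof -
  have "Cmp (Phi U) (Idm (Phi U) (fst x U)) (snd x U V)
      = Cmp (Phi U) (snd x U V) (snd (PhiR U V) (Idm (Phi V) (fst x V)))"
    if U: "U \<in> R" "V \<in> R" "U \<subseteq> V" for U V
    using cat_idl[OF category_at lim_obj_arr[OF x U]] cat_idr[OF category_at lim_obj_arr[OF x U]]
      functor_id[OF res_functor[OF U] lim_obj_ob[OF x U(2)]] U by simp
  then show ?thesis
    by (intro lim_arrI) (auto simp: twolim_simps x intro: cat_id[OF category_at lim_obj_ob[OF x]])
qed

lemma twolim_category: "category Lim"
proof -
  have assoc: "Cmp Lim h (Cmp Lim g f) = Cmp Lim (Cmp Lim h g) f"
    if fgh: "f \<in> Ar Lim" "g \<in> Ar Lim" "h \<in> Ar Lim" "Cod Lim f = Dom Lim g" "Cod Lim g = Dom Lim h"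
    for f g h
  proof -
    have "Cmp (Phi U) (snd (snd h) U) (Cmp (Phi U) (snd (snd g) U) (snd (snd f) U)) =
          Cmp (Phi U) (Cmp (Phi U) (snd (snd h) U) (snd (snd g) U)) (snd (snd f) U)" if U: "U \<in> R" for U
    proof -
      have l: "lim_arr R Phi PhiR f" "lim_arr R Phi PhiR g" "lim_arr R Phi PhiR h"
        and e: "fst (snd f) = fst g" "fst (snd g) = fst h"
        using fgh by (simp_all add: twolim_simps)
      have "arr (Phi U) (snd (snd f) U) (fst (fst f) U) (fst (fst (snd f)) U)"
        and "arr (Phi U) (snd (snd g) U) (fst (fst (snd f)) U) (fst (fst (snd g)) U)"
        and "arr (Phi U) (snd (snd h) U) (fst (fst (snd g)) U) (fst (fst (snd h)) U)"
        using lim_arr_arr[OF l(1) U] lim_arr_arr[OF l(2) U] lim_arr_arr[OF l(3) U] e by simp_all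
      then show ?thesis using cat_assoc[OF category_at[OF U]] by blast
    qed
    then show ?thesis unfolding twolim_simps by (auto intro!: ext)
  qed
  have unit: "Cmp Lim (Idm Lim (Cod Lim f)) f = f \<and> Cmp Lim f (Idm Lim (Dom Lim f)) = f"
    if "f \<in> Ar Lim" for f
  proof -
    obtain x y p where fx: "f = (x, y, p)" by (cases f) auto
    have f: "lim_arr R Phi PhiR f" using that by (simp add: twolim_simps)
    have pa: "\<And>U. U\<in>R \<Longrightarrow> arr (Phi U) (p U) (fst x U) (fst y U)"
      using lim_arr_arr[OF f] fx by auto
    have pu: "\<And>U. U \<notin> R \<Longrightarrow> p U = undefined" using lim_arr_undefined[OF f] fx by auto
    show ?thesis unfolding fx twolim_simps
      by (auto intro!: ext simp: cat_idl[OF category_at pa] cat_idr[OF category_at pa] pu)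
  qed
  show ?thesis unfolding category_def
    using lim_arr_dom lim_arr_cod lim_arr_id lim_arr_comp assoc unit by (simp add: twolim_simps)
qed

lemma twolim_groupoid: "groupoid Lim"
proof -
  have "iso_arr Lim f" if fA: "f \<in> Ar Lim" for f
  proof -
    obtain x y p where fx: "f = (x, y, p)" by (cases f) auto
    have f: "lim_arr R Phi PhiR f" using fA by (simp add: twolim_simps)
    have x: "lim_obj R Phi PhiR x" and y: "lim_obj R Phi PhiR y"
      using lim_arr_dom[OF f] lim_arr_cod[OF f] fx by auto
    have pa: "\<And>U. U\<in>R \<Longrightarrow> arr (Phi U) (p U) (fst x U) (fst y U)"
      using lim_arr_arr[OF f] fx by auto
    define q where "q = (\<lambda>U. if U \<in> R then inv_arr (Phi U) (p U) else undefined)"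
    have qa: "arr (Phi U) (q U) (fst y U) (fst x U)" "Cmp (Phi U) (q U) (p U) = Idm (Phi U) (fst x U)"
      "Cmp (Phi U) (p U) (q U) = Idm (Phi U) (fst y U)" if "U \<in> R" for U
      using inv_arr[OF groupoid_at[OF that] pa[OF that]] that unfolding q_def by auto
    have "Cmp (Phi U) (q U) (snd y U V) = Cmp (Phi U) (snd x U V) (snd (PhiR U V) (q V))"
      if U: "U \<in> R" "V \<in> R" "U \<subseteq> V" for U V
      using square_inverse[OF groupoid_at[OF U(1)] groupoid_at[OF U(2)] res_functor[OF U]
          pa[OF U(2)] pa[OF U(1)] lim_obj_arr[OF x U] lim_obj_arr[OF y U]]
        lim_arr_nat[OF f U] fx U unfolding q_def by simp
    moreover have "\<And>U. U \<notin> R \<Longrightarrow> q U = undefined" by (simp add: q_def)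
    ultimately have "(y, x, q) \<in> Ar Lim"
      unfolding twolim_simps by (intro CollectI lim_arrI) (auto simp: x y qa)
    moreover have "\<And>U. U \<notin> R \<Longrightarrow> p U = undefined" using lim_arr_undefined[OF f] fx by auto
    then have "Cmp Lim (y, x, q) f = Idm Lim (Dom Lim f)" "Cmp Lim f (y, x, q) = Idm Lim (Cod Lim f)"
      unfolding fx twolim_simps using qa by (auto intro!: ext simp: q_def)
    ultimately show ?thesis
      unfolding iso_arr_def using fA
      by (intro conjI bexI[where x="(y, x, q)"]) (simp_all add: fx twolim_simps)
  qed
  then show ?thesis unfolding groupoid_def using twolim_category by blast
qed

lemma restr_simps:
  "fst (restr_obj Q x) U = (if U \<in> Q then fst x U else undefined)"
  "snd (restr_obj Q x) U V = (if U \<in> Q \<and> V \<in> Q \<and> U \<subseteq> V then snd x U V else undefined)"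
  "fst (restr_ftor Q) = restr_obj Q"
  "snd (restr_ftor Q) f = (restr_obj Q (fst f), restr_obj Q (fst (snd f)),
     \<lambda>U. if U \<in> Q then snd (snd f) U else undefined)"
  by (simp_all add: restr_obj_def restr_ftor_def)

lemma lim_obj_restr:
  assumes Q: "Q \<subseteq> R" and x: "lim_obj R Phi PhiR x"
  shows "lim_obj Q Phi PhiR (restr_obj Q x)"
proof -
  interpret Q: gpd_presheaf Q Phi PhiR using gpd_presheaf_subset[OF Q] .
  show ?thesis
  proof (rule Q.lim_objI)
    fix U V W assume UVW: "U \<in> Q" "V \<in> Q" "W \<in> Q" "U \<subseteq> V" "V \<subseteq> W"
    then show "snd (restr_obj Q x) U W
        = Cmp (Phi U) (snd (restr_obj Q x) U V) (snd (PhiR U V) (snd (restr_obj Q x) V W))"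
      using lim_obj_cocycle[OF x subsetD[OF Q UVW(1)] subsetD[OF Q UVW(2)] subsetD[OF Q UVW(3)] UVW(4,5)]
        order_trans[OF UVW(4,5)] by (simp add: restr_simps)
  next
    fix U V assume "\<not> (U \<in> Q \<and> V \<in> Q \<and> U \<subseteq> V)"
    then show "snd (restr_obj Q x) U V = undefined" by (simp only: restr_simps if_False)
  qed (use lim_obj_ob[OF x subsetD[OF Q]] lim_obj_arr[OF x subsetD[OF Q] subsetD[OF Q]]
      lim_obj_id[OF x subsetD[OF Q]] in \<open>auto simp: restr_simps\<close>)
qed

lemma lim_arr_restr:
  assumes Q: "Q \<subseteq> R" and f: "lim_arr R Phi PhiR f"
  shows "lim_arr Q Phi PhiR (snd (restr_ftor Q) f)"
proof -
  interpret Q: gpd_presheaf Q Phi PhiR using gpd_presheaf_subset[OF Q] .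
  show ?thesis
  proof (rule Q.lim_arrI)
    show "lim_obj Q Phi PhiR (fst (snd (restr_ftor Q) f))"
      "lim_obj Q Phi PhiR (fst (snd (snd (restr_ftor Q) f)))"
      using lim_obj_restr[OF Q lim_arr_dom[OF f]] lim_obj_restr[OF Q lim_arr_cod[OF f]]
      by (simp_all add: restr_simps)
  qed (use lim_arr_arr[OF f subsetD[OF Q]] lim_arr_nat[OF f subsetD[OF Q] subsetD[OF Q]]
      in \<open>auto simp: restr_simps\<close>)
qed

lemma restr_ftor_functor:
  assumes Q: "Q \<subseteq> R"
  shows "is_functor Lim (twolim Q Phi PhiR) (restr_ftor Q)"
proof -
  interpret Q: gpd_presheaf Q Phi PhiR using gpd_presheaf_subset[OF Q] .
  show ?thesis
    unfolding is_functor_def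
  proof (intro conjI ballI impI)
    show "category Lim" "category (twolim Q Phi PhiR)" using twolim_category Q.twolim_category .
  qed (use lim_obj_restr[OF Q] lim_arr_restr[OF Q] Q
      in \<open>auto simp: twolim_simps Q.twolim_simps restr_simps intro!: ext\<close>)
qed

end

locale boolean_gpd_presheaf = gpd_presheaf "Bn n" Phi PhiR
  for n :: nat and Phi :: "nat set \<Rightarrow> ('o,'m) cat" and PhiR +
  assumes n_ge_3: "3 \<le> n"
begin

abbreviation "N \<equiv> {1..n}"
abbreviation "P \<equiv> Bn n"
abbreviation "Q \<equiv> Bnk n (n - 3)"

lemma P_iff: "U \<in> P \<longleftrightarrow> U \<subseteq> N \<and> U \<noteq> N"
  by (auto simp: Bn_def)

lemma Q_iff: "V \<in> Q \<longleftrightarrow> V \<subseteq> N \<and> V \<noteq> N \<and> n - 3 \<le> card V"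
proof
  assume "V \<in> Q"
  then have "V \<subseteq> N" "n - 3 \<le> card V" "card V \<le> n - 1" by (auto simp: Bnk_def)
  then show "V \<subseteq> N \<and> V \<noteq> N \<and> n - 3 \<le> card V" using n_ge_3 by auto
next
  assume a: "V \<subseteq> N \<and> V \<noteq> N \<and> n - 3 \<le> card V"
  then have "card V < card N" by (intro psubset_card_mono) auto
  then show "V \<in> Q" using a by (auto simp: Bnk_def)
qed

lemma Q_subset_P: "Q \<subseteq> P"
  using Q_iff P_iff by auto

lemma Q_remove_point:
  assumes "W \<in> Q" "n - 2 \<le> card W" shows "W - {c} \<in> Q"
proof -
  have W: "W \<subseteq> N" using assms(1) Q_iff by auto
  then have "card W - 1 \<le> card (W - {c})"
    by (cases "c \<in> W") (auto simp: card_Diff_singleton finite_subset)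
  then show ?thesis using assms W unfolding Q_iff by auto
qed

definition Q_above :: "nat set \<Rightarrow> nat set set" where
  "Q_above U = {V \<in> Q. U \<subseteq> V}"

lemma Q_above_iff: "V \<in> Q_above U \<longleftrightarrow> V \<in> Q \<and> U \<subseteq> V"
  by (simp add: Q_above_def)

lemma Q_above_P: "U \<in> P \<Longrightarrow> V \<in> Q_above U \<Longrightarrow> U \<subseteq> V \<and> V \<in> P \<and> V \<in> Q"
  using Q_above_iff Q_subset_P by auto

lemma Q_above_mono: "U \<subseteq> U' \<Longrightarrow> V \<in> Q_above U' \<Longrightarrow> V \<in> Q_above U"
  by (auto simp: Q_above_iff)

lemma Q_above_between:
  assumes "M \<in> Q_above U" "V \<in> Q" "M \<subseteq> S" "S \<subseteq> V"
  shows "S \<in> Q_above U"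
proof -
  have "S \<subseteq> N" "S \<noteq> N" using assms(2,4) Q_iff by auto
  moreover have "card M \<le> card S"
    using assms(3) \<open>S \<subseteq> N\<close> by (intro card_mono) (auto intro: finite_subset)
  ultimately show ?thesis using assms(1,3) by (auto simp: Q_above_iff Q_iff)
qed

lemma complement_in_Q_above:
  assumes "S \<subseteq> N" "S \<noteq> {}" "card S \<le> 3" "U \<inter> S = {}" "U \<subseteq> N"
  shows "N - S \<in> Q_above U"
proof -
  have "card (N - S) = n - card S" using assms(1) by (simp add: card_Diff_subset finite_subset)
  then show ?thesis using assms by (auto simp: Q_above_iff Q_iff)
qed

lemma coatom_in_Q_above:
  assumes "U \<subseteq> N" "a \<in> N" "a \<notin> U" shows "N - {a} \<in> Q_above U"
  using assms by (intro complement_in_Q_above) auto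

lemma Q_above_nonempty:
  assumes "U \<in> P" obtains c where "c \<in> N" "c \<notin> U" "N - {c} \<in> Q_above U"
proof -
  have "U \<subseteq> N" "U \<noteq> N" using assms P_iff by auto
  then obtain c where "c \<in> N" "c \<notin> U" by blast
  then show ?thesis using that \<open>U \<subseteq> N\<close> coatom_in_Q_above by blast
qed

lemma Q_above_missing_point:
  assumes "V \<in> Q_above U" obtains a where "a \<in> N" "a \<notin> V" "a \<notin> U"
  using assms unfolding Q_above_iff Q_iff by blast

text \<open>Any two members of \<open>Q_above U\<close> are joined by the zigzag
  \<open>V \<subseteq> N - {a} \<supseteq> N - {a, b} \<subseteq> N - {b} \<supseteq> W\<close>.\<close>

lemma Q_above_connected:
  assumes U: "U \<in> P"
    and inv: "\<And>V W. V \<in> Q_above U \<Longrightarrow> W \<in> Q_above U \<Longrightarrow> V \<subseteq> W \<Longrightarrow> (Pr V \<longleftrightarrow> Pr W)"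
    and V: "V \<in> Q_above U" and W: "W \<in> Q_above U"
  shows "Pr V \<longleftrightarrow> Pr W"
proof -
  have UN: "U \<subseteq> N" using U P_iff by auto
  obtain a where a: "a \<in> N" "a \<notin> V" "a \<notin> U" using Q_above_missing_point[OF V] .
  obtain b where b: "b \<in> N" "b \<notin> W" "b \<notin> U" using Q_above_missing_point[OF W] .
  have Va: "N - {a} \<in> Q_above U" and Wb: "N - {b} \<in> Q_above U"
    using coatom_in_Q_above[OF UN] a b by auto
  have Vab: "N - {a, b} \<in> Q_above U"
    using a b UN by (intro complement_in_Q_above) (auto simp: card_insert_if)
  have "V \<subseteq> N - {a}" "W \<subseteq> N - {b}" using V W a b by (auto simp: Q_above_iff Q_iff)
  then show ?thesis using inv[OF V Va] inv[OF W Wb] inv[OF Vab Va] inv[OF Vab Wb] by blast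
qed

end

sublocale boolean_gpd_presheaf \<subseteq> Q: gpd_presheaf "Bnk n (n - 3)" Phi PhiR
  using gpd_presheaf_subset[OF Q_subset_P] .

section \<open>Gluing descent data along \<open>Q_above U\<close>\<close>

context boolean_gpd_presheaf
begin

definition pull_ob :: "('o,'m) lobj \<Rightarrow> nat set \<Rightarrow> nat set \<Rightarrow> 'o" where
  "pull_ob x U V = fst (PhiR U V) (fst x V)"
definition pull_arr :: "('o,'m) lobj \<Rightarrow> nat set \<Rightarrow> nat set \<Rightarrow> nat set \<Rightarrow> 'm" where
  "pull_arr x U V W = snd (PhiR U V) (snd x V W)"

lemma pull_ob_ob:
  assumes x: "lim_obj Q Phi PhiR x" and U: "U \<in> P" and V: "V \<in> Q_above U"
  shows "pull_ob x U V \<in> Ob (Phi U)"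
  using functor_ob[OF res_functor[OF U] Q.lim_obj_ob[OF x]] Q_above_P[OF U V] unfolding pull_ob_def by blast

lemma pull_arr_arr:
  assumes x: "lim_obj Q Phi PhiR x" and U: "U \<in> P" and V: "V \<in> Q_above U" and W: "W \<in> Q_above U"
  and VW: "V \<subseteq> W"
  shows "arr (Phi U) (pull_arr x U V W) (pull_ob x U W) (pull_ob x U V)"
proof -
  have v: "U \<subseteq> V" "V \<in> P" "V \<in> Q" and w: "U \<subseteq> W" "W \<in> P" "W \<in> Q"
    using Q_above_P[OF U V] Q_above_P[OF U W] by auto
  have a: "arr (Phi V) (snd x V W) (fst (PhiR V W) (fst x W)) (fst x V)"
    using Q.lim_obj_arr[OF x v(3) w(3) VW] .
  have "fst (PhiR U W) (fst x W) = fst (PhiR U V) (fst (PhiR V W) (fst x W))"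
    using res_comp_ob[OF U v(2) w(2) v(1) VW Q.lim_obj_ob[OF x w(3)]] .
  then show ?thesis
    using functor_arr[OF res_functor[OF U v(2) v(1)] a] unfolding pull_ob_def pull_arr_def by simp
qed

lemma pull_arr_id:
  assumes x: "lim_obj Q Phi PhiR x" and U: "U \<in> P" and V: "V \<in> Q_above U"
  shows "pull_arr x U V V = Idm (Phi U) (pull_ob x U V)"
proof -
  have v: "U \<subseteq> V" "V \<in> P" "V \<in> Q" using Q_above_P[OF U V] by auto
  show ?thesis unfolding pull_arr_def pull_ob_def
    using Q.lim_obj_id[OF x v(3)] functor_id[OF res_functor[OF U v(2) v(1)] Q.lim_obj_ob[OF x v(3)]] by simp
qed

lemma pull_arr_cocycle:
  assumes x: "lim_obj Q Phi PhiR x" and U: "U \<in> P" and V: "V \<in> Q_above U" and W: "W \<in> Q_above U"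
  and X: "X \<in> Q_above U" and VW: "V \<subseteq> W" and WX: "W \<subseteq> X"
  shows "pull_arr x U V X = Cmp (Phi U) (pull_arr x U V W) (pull_arr x U W X)"
proof -
  have v: "U \<subseteq> V" "V \<in> P" "V \<in> Q" and w: "U \<subseteq> W" "W \<in> P" "W \<in> Q" and xx: "U \<subseteq> X" "X \<in> P" "X \<in> Q"
    using Q_above_P[OF U V] Q_above_P[OF U W] Q_above_P[OF U X] by auto
  have e: "snd x V X = Cmp (Phi V) (snd x V W) (snd (PhiR V W) (snd x W X))"
    using Q.lim_obj_cocycle[OF x v(3) w(3) xx(3) VW WX] .
  have a1: "arr (Phi V) (snd x V W) (fst (PhiR V W) (fst x W)) (fst x V)"
    using Q.lim_obj_arr[OF x v(3) w(3) VW] .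
  have a2: "arr (Phi W) (snd x W X) (fst (PhiR W X) (fst x X)) (fst x W)"
    using Q.lim_obj_arr[OF x w(3) xx(3) WX] .
  have a2': "arr (Phi V) (snd (PhiR V W) (snd x W X)) (fst (PhiR V W) (fst (PhiR W X) (fst x X)))
      (fst (PhiR V W) (fst x W))"
    using functor_arr[OF res_functor[OF v(2) w(2) VW] a2] .
  have "snd (PhiR U V) (snd x V X)
      = Cmp (Phi U) (snd (PhiR U V) (snd x V W)) (snd (PhiR U V) (snd (PhiR V W) (snd x W X)))"
    using e functor_comp[OF res_functor[OF U v(2) v(1)] a2' a1] by simp
  also have "snd (PhiR U V) (snd (PhiR V W) (snd x W X)) = snd (PhiR U W) (snd x W X)"
    using res_comp_arr[OF U v(2) w(2) v(1) VW a2] by simp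
  finally show ?thesis unfolding pull_arr_def .
qed

lemma pull_ob_res:
  assumes x: "lim_obj Q Phi PhiR x" and U: "U \<in> P" "U' \<in> P" "U \<subseteq> U'" and V: "V \<in> Q_above U'"
  shows "fst (PhiR U U') (pull_ob x U' V) = pull_ob x U V"
proof -
  have v: "U' \<subseteq> V" "V \<in> P" "V \<in> Q" using Q_above_P[OF U(2) V] by auto
  show ?thesis
    unfolding pull_ob_def using res_comp_ob[OF U(1,2) v(2) U(3) v(1) Q.lim_obj_ob[OF x v(3)]] by simp
qed

lemma pull_arr_res:
  assumes x: "lim_obj Q Phi PhiR x" and U: "U \<in> P" "U' \<in> P" "U \<subseteq> U'"
  and V: "V \<in> Q_above U'" and W: "W \<in> Q_above U'" and VW: "V \<subseteq> W"
  shows "snd (PhiR U U') (pull_arr x U' V W) = pull_arr x U V W"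
proof -
  have v: "U' \<subseteq> V" "V \<in> P" "V \<in> Q" using Q_above_P[OF U(2) V] by auto
  have w: "W \<in> Q" using Q_above_P[OF U(2) W] by auto
  show ?thesis
    unfolding pull_arr_def
    using res_comp_arr[OF U(1,2) v(2) U(3) v(1) Q.lim_obj_arr[OF x v(3) w VW]] by simp
qed

definition trivialises :: "('o,'m) lobj \<Rightarrow> nat set \<Rightarrow> nat set set \<Rightarrow> 'o \<Rightarrow> (nat set \<Rightarrow> 'm) \<Rightarrow> bool" where
  "trivialises x U S a \<gamma> \<longleftrightarrow> a \<in> Ob (Phi U) \<and> (\<forall>V\<in>S. arr (Phi U) (\<gamma> V) (pull_ob x U V) a)
     \<and> (\<forall>V\<in>S. \<forall>W\<in>S. V \<subseteq> W \<longrightarrow> \<gamma> W = Cmp (Phi U) (\<gamma> V) (pull_arr x U V W))"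

lemma trivialises_ob: "trivialises x U S a \<gamma> \<Longrightarrow> a \<in> Ob (Phi U)"
  unfolding trivialises_def by blast

lemma trivialises_arr: "trivialises x U S a \<gamma> \<Longrightarrow> V \<in> S \<Longrightarrow> arr (Phi U) (\<gamma> V) (pull_ob x U V) a"
  unfolding trivialises_def by blast

lemma trivialises_cocycle: "trivialises x U S a \<gamma> \<Longrightarrow> V \<in> S \<Longrightarrow> W \<in> S \<Longrightarrow> V \<subseteq> W \<Longrightarrow>
   \<gamma> W = Cmp (Phi U) (\<gamma> V) (pull_arr x U V W)"
  unfolding trivialises_def by blast

lemma trivialises_subset: "trivialises x U S a \<gamma> \<Longrightarrow> S' \<subseteq> S \<Longrightarrow> trivialises x U S' a \<gamma>"
  unfolding trivialises_def by (meson subsetD)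

definition descent_map ::
    "('o,'m) lobj \<Rightarrow> ('o,'m) lobj \<Rightarrow> nat set \<Rightarrow> nat set set \<Rightarrow> (nat set \<Rightarrow> 'm) \<Rightarrow> bool" where
  "descent_map x y U S \<phi> \<longleftrightarrow> (\<forall>V\<in>S. arr (Phi U) (\<phi> V) (pull_ob x U V) (pull_ob y U V))
     \<and> (\<forall>V\<in>S. \<forall>W\<in>S. V \<subseteq> W \<longrightarrow>
          Cmp (Phi U) (pull_arr y U V W) (\<phi> W) = Cmp (Phi U) (\<phi> V) (pull_arr x U V W))"

lemma comparison_square_step:
  assumes x: "lim_obj Q Phi PhiR x" and y: "lim_obj Q Phi PhiR y" and U: "U \<in> P" "U \<subseteq> U'"
    and tx: "trivialises x U (Q_above U') a \<gamma>" and ty: "trivialises y U (Q_above U') d \<delta>"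
    and \<phi>: "descent_map x y U (Q_above U') \<phi>" and h: "arr (Phi U) h a d"
    and V: "V \<in> Q_above U'" and W: "W \<in> Q_above U'" and VW: "V \<subseteq> W"
  shows "Cmp (Phi U) h (\<gamma> V) = Cmp (Phi U) (\<delta> V) (\<phi> V) \<longleftrightarrow> Cmp (Phi U) h (\<gamma> W) = Cmp (Phi U) (\<delta> W) (\<phi> W)"
proof -
  have c: "category (Phi U)" using category_at[OF U(1)] .
  have V1: "V \<in> Q_above U" and W1: "W \<in> Q_above U" using Q_above_mono[OF U(2)] V W by auto
  have bx: "arr (Phi U) (pull_arr x U V W) (pull_ob x U W) (pull_ob x U V)"
    and by': "arr (Phi U) (pull_arr y U V W) (pull_ob y U W) (pull_ob y U V)"
    using pull_arr_arr[OF x U(1) V1 W1 VW] pull_arr_arr[OF y U(1) V1 W1 VW] .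
  have \<gamma>V: "arr (Phi U) (\<gamma> V) (pull_ob x U V) a" and \<delta>V: "arr (Phi U) (\<delta> V) (pull_ob y U V) d"
    using trivialises_arr[OF tx V] trivialises_arr[OF ty V] .
  have \<phi>V: "arr (Phi U) (\<phi> V) (pull_ob x U V) (pull_ob y U V)"
    and \<phi>W: "arr (Phi U) (\<phi> W) (pull_ob x U W) (pull_ob y U W)"
    using \<phi> V W unfolding descent_map_def by auto
  have e1: "Cmp (Phi U) h (\<gamma> W) = Cmp (Phi U) (Cmp (Phi U) h (\<gamma> V)) (pull_arr x U V W)"
    using trivialises_cocycle[OF tx V W VW] cat_assoc[OF c bx \<gamma>V h] by simp
  have "Cmp (Phi U) (\<delta> W) (\<phi> W) = Cmp (Phi U) (\<delta> V) (Cmp (Phi U) (pull_arr y U V W) (\<phi> W))"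
    using trivialises_cocycle[OF ty V W VW] cat_assoc[OF c \<phi>W by' \<delta>V] by simp
  also have "\<dots> = Cmp (Phi U) (Cmp (Phi U) (\<delta> V) (\<phi> V)) (pull_arr x U V W)"
    using \<phi> V W VW cat_assoc[OF c bx \<phi>V \<delta>V] unfolding descent_map_def by simp
  finally have e2: "Cmp (Phi U) (\<delta> W) (\<phi> W) = Cmp (Phi U) (Cmp (Phi U) (\<delta> V) (\<phi> V)) (pull_arr x U V W)" .
  show ?thesis
    using e1 e2 groupoid_cancel_right[OF groupoid_at[OF U(1)] bx cat_comp[OF c \<gamma>V h] cat_comp[OF c \<phi>V \<delta>V]]
    by auto
qed

lemma comparison_exists:
  assumes x: "lim_obj Q Phi PhiR x" and y: "lim_obj Q Phi PhiR y" and U: "U \<in> P" "U' \<in> P" "U \<subseteq> U'"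
    and tx: "trivialises x U (Q_above U') a \<gamma>" and ty: "trivialises y U (Q_above U') d \<delta>"
    and \<phi>: "descent_map x y U (Q_above U') \<phi>"
  shows "\<exists>h. arr (Phi U) h a d \<and> (\<forall>V\<in>Q_above U'. Cmp (Phi U) h (\<gamma> V) = Cmp (Phi U) (\<delta> V) (\<phi> V))"
proof -
  have c: "category (Phi U)" using category_at[OF U(1)] .
  obtain e where V\<^sub>0: "N - {e} \<in> Q_above U'" using Q_above_nonempty[OF U(2)] by blast
  define V\<^sub>0 where "V\<^sub>0 = N - {e}"
  have V\<^sub>0: "V\<^sub>0 \<in> Q_above U'" using V\<^sub>0 V\<^sub>0_def by simp
  have \<gamma>: "arr (Phi U) (\<gamma> V\<^sub>0) (pull_ob x U V\<^sub>0) a" using trivialises_arr[OF tx V\<^sub>0] .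
  note \<gamma>inv = inv_arr[OF groupoid_at[OF U(1)] \<gamma>]
  have \<delta>\<phi>: "arr (Phi U) (Cmp (Phi U) (\<delta> V\<^sub>0) (\<phi> V\<^sub>0)) (pull_ob x U V\<^sub>0) d"
    using \<phi> V\<^sub>0 cat_comp[OF c _ trivialises_arr[OF ty V\<^sub>0]] unfolding descent_map_def by blast
  define h where "h = Cmp (Phi U) (Cmp (Phi U) (\<delta> V\<^sub>0) (\<phi> V\<^sub>0)) (inv_arr (Phi U) (\<gamma> V\<^sub>0))"
  have h: "arr (Phi U) h a d" unfolding h_def using cat_comp[OF c _ \<delta>\<phi>] \<gamma>inv by blast
  have "Cmp (Phi U) h (\<gamma> V\<^sub>0) = Cmp (Phi U) (\<delta> V\<^sub>0) (\<phi> V\<^sub>0)"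
    using cat_assoc[OF c \<gamma> \<gamma>inv[THEN conjunct1] \<delta>\<phi>] \<gamma>inv cat_idr[OF c \<delta>\<phi>] unfolding h_def by simp
  moreover note Q_above_connected[OF U(2),
      where Pr = "\<lambda>V. Cmp (Phi U) h (\<gamma> V) = Cmp (Phi U) (\<delta> V) (\<phi> V)",
      OF comparison_square_step[OF x y U(1,3) tx ty \<phi> h] V\<^sub>0]
  ultimately have "\<forall>V\<in>Q_above U'. Cmp (Phi U) h (\<gamma> V) = Cmp (Phi U) (\<delta> V) (\<phi> V)"
    by blast
  then show ?thesis using h by blast
qed

lemma comparison_at:
  assumes "lim_obj Q Phi PhiR x" "lim_obj Q Phi PhiR y" "U \<in> P" "U' \<in> P" "U \<subseteq> U'"
    and "trivialises x U (Q_above U') a \<gamma>" "trivialises y U (Q_above U') d \<delta>"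
    and "descent_map x y U (Q_above U') \<phi>"
  shows "arr (Phi U) (comparison (Phi U) (Q_above U') a \<gamma> d \<delta> \<phi>) a d"
    and "V \<in> Q_above U' \<Longrightarrow>
      Cmp (Phi U) (comparison (Phi U) (Q_above U') a \<gamma> d \<delta> \<phi>) (\<gamma> V) = Cmp (Phi U) (\<delta> V) (\<phi> V)"
proof -
  obtain e where "N - {e} \<in> Q_above U'" using Q_above_nonempty[OF assms(4)] by blast
  note cmp = comparison[OF groupoid_at[OF assms(3)] this trivialises_arr[OF assms(6) this]
      comparison_exists[OF assms]]
  show "arr (Phi U) (comparison (Phi U) (Q_above U') a \<gamma> d \<delta> \<phi>) a d" using cmp(1) .
  show "V \<in> Q_above U' \<Longrightarrow>
      Cmp (Phi U) (comparison (Phi U) (Q_above U') a \<gamma> d \<delta> \<phi>) (\<gamma> V) = Cmp (Phi U) (\<delta> V) (\<phi> V)"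
    using cmp(2) by blast
qed

lemma comparison_unique_at:
  assumes "U \<in> P" "U' \<in> P" "trivialises x U (Q_above U') a \<gamma>"
    and "arr (Phi U) h a d" "\<And>V. V \<in> Q_above U' \<Longrightarrow> Cmp (Phi U) h (\<gamma> V) = Cmp (Phi U) (\<delta> V) (\<phi> V)"
  shows "comparison (Phi U) (Q_above U') a \<gamma> d \<delta> \<phi> = h"
proof -
  obtain e where "N - {e} \<in> Q_above U'" using Q_above_nonempty[OF assms(2)] by blast
  then show ?thesis
    using comparison_eq[where \<gamma>=\<gamma>, OF groupoid_at[OF assms(1)] _ trivialises_arr[OF assms(3)] assms(4)]
      assms(5) by blast
qed

lemma trivialises_arr_ext:
  assumes "U \<in> P" "U' \<in> P" "trivialises x U (Q_above U') a \<gamma>"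
    and "arr (Phi U) h a d" "arr (Phi U) h' a d"
    and "\<And>V. V \<in> Q_above U' \<Longrightarrow> Cmp (Phi U) h (\<gamma> V) = Cmp (Phi U) h' (\<gamma> V)"
  shows "h = h'"
proof -
  obtain e where "N - {e} \<in> Q_above U'" using Q_above_nonempty[OF assms(2)] by blast
  then show ?thesis
    using groupoid_cancel_right[OF groupoid_at[OF assms(1)] trivialises_arr[OF assms(3)] assms(4,5)]
      assms(6)
    by blast
qed

end

locale descent = boolean_gpd_presheaf +
  fixes x U
  assumes x: "lim_obj (Bnk n (n - 3)) Phi PhiR x" and U: "U \<in> Bn n"
begin

abbreviation "C \<equiv> Phi U"
abbreviation "s V \<equiv> pull_ob x U V"
abbreviation "b V W \<equiv> pull_arr x U V W"

lemma groupoid_C: "groupoid C" using groupoid_at U by blast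
lemma category_C: "category C" using category_at U by blast

lemma b_arr: "V \<in> Q_above U \<Longrightarrow> W \<in> Q_above U \<Longrightarrow> V \<subseteq> W \<Longrightarrow> arr C (b V W) (s W) (s V)"
  using pull_arr_arr[OF x U] by blast
lemma b_id: "V \<in> Q_above U \<Longrightarrow> b V V = Idm C (s V)"
  using pull_arr_id[OF x U] by blast
lemma b_cocycle: "V \<in> Q_above U \<Longrightarrow> W \<in> Q_above U \<Longrightarrow> X \<in> Q_above U \<Longrightarrow> V \<subseteq> W \<Longrightarrow> W \<subseteq> X \<Longrightarrow>
   b V X = Cmp C (b V W) (b W X)"
  using pull_arr_cocycle[OF x U] by blast

text \<open>Transport between two members of \<open>Q_above U\<close> that need not be comparable, through
  their intersection; \<open>transport_char\<close> shows that any common lower bound in \<open>Q_above U\<close>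
  may be used instead, which makes the transports a cocycle.\<close>

definition transport where
  "transport V W = (THE h. arr C h (s W) (s V) \<and> Cmp C (b (V \<inter> W) V) h = b (V \<inter> W) W)"

abbreviation "t \<equiv> transport"

lemma transport_char:
  assumes V: "V \<in> Q_above U" and W: "W \<in> Q_above U" and M: "M \<in> Q_above U" "M \<subseteq> V" "M \<subseteq> W"
  shows "arr C (t V W) (s W) (s V) \<and> Cmp C (b M V) (t V W) = b M W"
proof -
  define I where "I = V \<inter> W"
  have I: "I \<in> Q_above U" using Q_above_between[OF M(1), of V I] V M unfolding I_def Q_above_iff by auto
  have IV: "I \<subseteq> V" "I \<subseteq> W" unfolding I_def by auto
  have bIV: "arr C (b I V) (s V) (s I)" and bIW: "arr C (b I W) (s W) (s I)" using b_arr I V W IV by auto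
  note gi = inv_arr[OF groupoid_C bIV]
  define h0 where "h0 = Cmp C (inv_arr C (b I V)) (b I W)"
  have h0: "arr C h0 (s W) (s V)" unfolding h0_def using cat_comp[OF category_C bIW] gi by blast
  have h0e: "Cmp C (b I V) h0 = b I W"
    using cat_assoc[OF category_C bIW gi[THEN conjunct1] bIV] gi cat_idl[OF category_C bIW]
    unfolding h0_def by simp
  have ex: "arr C (t V W) (s W) (s V) \<and> Cmp C (b I V) (t V W) = b I W"
    unfolding transport_def I_def[symmetric]
  proof (rule theI[of _ h0])
    show "arr C h0 (s W) (s V) \<and> Cmp C (b I V) h0 = b I W" using h0 h0e by blast
    fix h assume h: "arr C h (s W) (s V) \<and> Cmp C (b I V) h = b I W"
    then show "h = h0" using groupoid_cancel_left[OF groupoid_C bIV conjunct1[OF h] h0] h0e by simp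
  qed
  have MI: "M \<subseteq> I" using M unfolding I_def by auto
  have bMI: "arr C (b M I) (s I) (s M)" using b_arr M I MI by auto
  have "Cmp C (b M V) (t V W) = Cmp C (Cmp C (b M I) (b I V)) (t V W)"
    using b_cocycle[OF M(1) I V MI IV(1)] by simp
  also have "\<dots> = Cmp C (b M I) (Cmp C (b I V) (t V W))"
    using cat_assoc[OF category_C conjunct1[OF ex] bIV bMI] by simp
  also have "\<dots> = b M W" using ex b_cocycle[OF M(1) I W MI IV(2)] by simp
  finally show ?thesis using ex by blast
qed

lemma transport_unique:
  assumes V: "V \<in> Q_above U" and W: "W \<in> Q_above U" and M: "M \<in> Q_above U" "M \<subseteq> V" "M \<subseteq> W"
  and h: "arr C h (s W) (s V)" "Cmp C (b M V) h = b M W"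
  shows "h = t V W"
proof -
  have bMV: "arr C (b M V) (s V) (s M)" using b_arr M V by auto
  note tc = transport_char[OF V W M]
  show ?thesis using groupoid_cancel_left[OF groupoid_C bMV h(1) conjunct1[OF tc]] tc h(2) by simp
qed

lemma transport_subset:
  assumes V: "V \<in> Q_above U" and W: "W \<in> Q_above U" and VW: "V \<subseteq> W"
  shows "t V W = b V W"
proof -
  have "b V W = t V W"
  proof (rule transport_unique[OF V W V order_refl VW])
    show "arr C (b V W) (s W) (s V)" using b_arr V W VW by auto
    show "Cmp C (b V V) (b V W) = b V W" using b_id[OF V] cat_idl[OF category_C b_arr[OF V W VW]] by simp
  qed
  then show ?thesis by simp
qed

lemma transport_arr:
  assumes V: "V \<in> Q_above U" and W: "W \<in> Q_above U" and M: "M \<in> Q_above U" "M \<subseteq> V" "M \<subseteq> W"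
  shows "arr C (t V W) (s W) (s V)"
  using transport_char[OF assms] by blast

lemma transport_cocycle:
  assumes V: "V \<in> Q_above U" and W: "W \<in> Q_above U" and X: "X \<in> Q_above U"
  and M: "M \<in> Q_above U" "M \<subseteq> V" "M \<subseteq> W" "M \<subseteq> X"
  shows "Cmp C (t V W) (t W X) = t V X"
proof (rule transport_unique[OF V X M(1,2,4)])
  have a1: "arr C (t V W) (s W) (s V)" and a2: "arr C (t W X) (s X) (s W)"
    using transport_arr[OF V W M(1,2,3)] transport_arr[OF W X M(1,3,4)] .
  show "arr C (Cmp C (t V W) (t W X)) (s X) (s V)" using cat_comp[OF category_C a2 a1] .
  have bMV: "arr C (b M V) (s V) (s M)" using b_arr M V by auto
  have "Cmp C (b M V) (Cmp C (t V W) (t W X)) = Cmp C (Cmp C (b M V) (t V W)) (t W X)"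
    using cat_assoc[OF category_C a2 a1 bMV] .
  also have "\<dots> = Cmp C (b M W) (t W X)" using transport_char[OF V W M(1,2,3)] by simp
  also have "\<dots> = b M X" using transport_char[OF W X M(1,3,4)] by simp
  finally show "Cmp C (b M V) (Cmp C (t V W) (t W X)) = b M X" .
qed

end

text \<open>A trivialisation of the descent data is built over the base point \<open>V\<^sub>0 = N - {c}\<close>:
  \<open>cone V\<close> transports \<open>s V\<close> to \<open>s V\<^sub>0\<close>, directly when \<open>V - {c} = V \<inter> V\<^sub>0\<close> is big enough
  to lie in \<open>Q\<close>, and otherwise through a coatom \<open>N - {a}\<close> with \<open>a \<notin> V \<union> U\<close>.\<close>

locale based_descent = descent +
  fixes c
  assumes c: "c \<in> N" "c \<notin> U"
begin

abbreviation "V\<^sub>0 \<equiv> N - {c}"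

definition avoid :: "nat set \<Rightarrow> nat" where
  "avoid V = (SOME a. a \<in> N \<and> a \<notin> V \<and> a \<notin> U)"

definition cone where
  "cone V = (if V - {c} \<in> Q then t V\<^sub>0 V else Cmp C (t V\<^sub>0 (N - {avoid V})) (t (N - {avoid V}) V))"

lemma U_subset_N: "U \<subseteq> N" using U P_iff by auto

lemma subset_N: "W \<in> Q_above U \<Longrightarrow> W \<subseteq> N"
  using Q_above_iff Q_iff by auto

lemma base: "V\<^sub>0 \<in> Q_above U"
  using coatom_in_Q_above[OF U_subset_N c] .

lemma coatom: "a \<in> N \<Longrightarrow> a \<notin> U \<Longrightarrow> N - {a} \<in> Q_above U"
  using coatom_in_Q_above[OF U_subset_N] .

lemma base_coatom: "a \<in> N \<Longrightarrow> a \<notin> U \<Longrightarrow> N - {c, a} \<in> Q_above U"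
  using c U_subset_N by (intro complement_in_Q_above) (auto simp: card_insert_if)

lemma avoid: "V \<in> Q_above U \<Longrightarrow> avoid V \<in> N \<and> avoid V \<notin> V \<and> avoid V \<notin> U"
  unfolding avoid_def by (rule someI_ex) (meson Q_above_missing_point)

lemma remove_point_Q_above: "W \<in> Q_above U \<Longrightarrow> W - {d} \<in> Q \<Longrightarrow> d \<notin> U \<Longrightarrow> W - {d} \<in> Q_above U"
  using Q_above_iff by auto

lemma transport_via_coatom:
  assumes W: "W \<in> Q_above U" "W - {c} \<in> Q" "W - {a} \<in> Q" and a: "a \<in> N" "a \<notin> U"
  shows "t V\<^sub>0 W = Cmp C (t V\<^sub>0 (N - {a})) (t (N - {a}) W)"
proof -
  obtain e where e: "e \<in> N" "e \<notin> W" "e \<notin> U" using Q_above_missing_point[OF W(1)] .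
  define We where "We = N - {e}"
  define Va where "Va = N - {a}"
  have We: "We \<in> Q_above U" using coatom[OF e(1,3)] We_def by simp
  have Va: "Va \<in> Q_above U" using coatom[OF a] Va_def by simp
  have Mc: "W - {c} \<in> Q_above U" using remove_point_Q_above[OF W(1,2) c(2)] .
  have Ma: "W - {a} \<in> Q_above U" using remove_point_Q_above[OF W(1,3) a(2)] .
  have M3: "N - {c, a, e} \<in> Q_above U"
    using a e c U_subset_N by (intro complement_in_Q_above) (auto simp: card_insert_if)
  have e1: "Cmp C (t V\<^sub>0 We) (t We W) = t V\<^sub>0 W"
    by (rule transport_cocycle[OF base We W(1) Mc]) (use e subset_N[OF W(1)] in \<open>auto simp: We_def\<close>)
  have e2: "Cmp C (t Va We) (t We W) = t Va W"
    by (rule transport_cocycle[OF Va We W(1) Ma]) (use e subset_N[OF W(1)] in \<open>auto simp: Va_def We_def\<close>)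
  have e3: "Cmp C (t V\<^sub>0 Va) (t Va We) = t V\<^sub>0 We"
    by (rule transport_cocycle[OF base Va We M3]) (auto simp: We_def Va_def)
  have a1: "arr C (t We W) (s W) (s We)"
    by (rule transport_arr[OF We W(1) Mc]) (use e subset_N[OF W(1)] in \<open>auto simp: We_def\<close>)
  have a2: "arr C (t Va We) (s We) (s Va)"
    by (rule transport_arr[OF Va We M3]) (auto simp: We_def Va_def)
  have a3: "arr C (t V\<^sub>0 Va) (s Va) (s V\<^sub>0)"
    by (rule transport_arr[OF base Va M3]) (auto simp: Va_def)
  have "Cmp C (t V\<^sub>0 Va) (t Va W) = Cmp C (Cmp C (t V\<^sub>0 Va) (t Va We)) (t We W)"
    using e2 cat_assoc[OF category_C a1 a2 a3] by simp
  then show ?thesis using e1 e3 unfolding Va_def by simp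
qed

lemma cone_far:
  assumes V: "V \<in> Q_above U"
  defines "a \<equiv> avoid V"
  shows "arr C (t (N - {a}) V) (s V) (s (N - {a}))" "arr C (t V\<^sub>0 (N - {a})) (s (N - {a})) (s V\<^sub>0)"
proof -
  have a: "a \<in> N" "a \<notin> V" "a \<notin> U" using avoid[OF V] a_def by auto
  show "arr C (t (N - {a}) V) (s V) (s (N - {a}))"
    by (rule transport_arr[OF coatom[OF a(1,3)] V V]) (use a subset_N[OF V] in auto)
  show "arr C (t V\<^sub>0 (N - {a})) (s (N - {a})) (s V\<^sub>0)"
    by (rule transport_arr[OF base coatom[OF a(1,3)] base_coatom[OF a(1,3)]]) auto
qed

lemma cone_arr:
  assumes V: "V \<in> Q_above U" shows "arr C (cone V) (s V) (s V\<^sub>0)"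
proof (cases "V - {c} \<in> Q")
  case True
  then show ?thesis unfolding cone_def
    using transport_arr[OF base V remove_point_Q_above[OF V True c(2)]] subset_N[OF V] by auto
next
  case False
  then show ?thesis unfolding cone_def using cat_comp[OF category_C cone_far[OF V]] by simp
qed

lemma cone_cocycle:
  assumes V: "V \<in> Q_above U" and W: "W \<in> Q_above U" and VW: "V \<subseteq> W"
  shows "cone W = Cmp C (cone V) (b V W)"
proof (cases "V - {c} \<in> Q")
  case True
  have Mc: "V - {c} \<in> Q_above U" using remove_point_Q_above[OF V True c(2)] .
  have "W - {c} \<in> Q" using Q_above_between[OF Mc, of W "W - {c}"] W VW Q_above_iff by auto
  moreover have "Cmp C (t V\<^sub>0 V) (t V W) = t V\<^sub>0 W"
    by (rule transport_cocycle[OF base V W Mc]) (use VW subset_N[OF V] in auto)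
  ultimately show ?thesis using True transport_subset[OF V W VW] unfolding cone_def by simp
next
  case False
  show ?thesis
  proof (cases "W = V")
    case True
    then show ?thesis using b_id[OF V] cat_idr[OF category_C cone_arr[OF V]] by simp
  next
    case WV: False
    have "card V < card W"
      using psubset_card_mono[OF finite_subset[OF subset_N[OF W]]] VW WV by blast
    moreover have "n - 3 \<le> card V" using V Q_above_iff Q_iff by auto
    ultimately have cW: "n - 2 \<le> card W" by linarith
    define a where "a = avoid V"
    have a: "a \<in> N" "a \<notin> V" "a \<notin> U" using avoid[OF V] a_def by auto
    have WQ: "W \<in> Q" using W Q_above_iff by auto
    have Wc: "W - {c} \<in> Q" and Wa: "W - {a} \<in> Q" using Q_remove_point[OF WQ cW] by auto
    have VVa: "V \<subseteq> N - {a}" using a subset_N[OF V] by auto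
    note far = cone_far[OF V, folded a_def]
    have "Cmp C (cone V) (b V W) = Cmp C (t V\<^sub>0 (N - {a})) (Cmp C (t (N - {a}) V) (t V W))"
      using False cat_assoc[OF category_C transport_arr[OF V W V order_refl VW] far]
        transport_subset[OF V W VW] unfolding cone_def a_def by simp
    also have "\<dots> = Cmp C (t V\<^sub>0 (N - {a})) (t (N - {a}) W)"
      using transport_cocycle[OF coatom[OF a(1,3)] V W V VVa order_refl VW] by simp
    also have "\<dots> = cone W"
      using transport_via_coatom[OF W Wc Wa a(1,3)] Wc unfolding cone_def by simp
    finally show ?thesis by simp
  qed
qed

lemma trivialisation_exists: "trivialises x U (Q_above U) (s V\<^sub>0) cone"
  unfolding trivialises_def using pull_ob_ob[OF x U base] cone_arr cone_cocycle by blast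

end

section \<open>The inverse functor: gluing an object over \<open>Q\<close> to one over \<open>P\<close>\<close>

context boolean_gpd_presheaf
begin

lemma trivialisable:
  assumes "lim_obj Q Phi PhiR x" "U \<in> P"
  shows "\<exists>a \<gamma>. trivialises x U (Q_above U) a \<gamma>"
proof -
  obtain c where "c \<in> N" "c \<notin> U" using Q_above_nonempty[OF assms(2)] by blast
  then interpret based_descent n Phi PhiR x U c
    using assms by unfold_locales auto
  show ?thesis using trivialisation_exists by blast
qed

lemma trivialises_res:
  assumes x: "lim_obj Q Phi PhiR x" and U: "U \<in> P" "U' \<in> P" "U \<subseteq> U'"
    and t: "trivialises x U' (Q_above U') a \<gamma>"
  shows "trivialises x U (Q_above U') (fst (PhiR U U') a) (\<lambda>V. snd (PhiR U U') (\<gamma> V))"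
  unfolding trivialises_def
proof (intro conjI ballI impI)
  have F: "is_functor (Phi U') (Phi U) (PhiR U U')" using res_functor[OF U] .
  show "fst (PhiR U U') a \<in> Ob (Phi U)" using functor_ob[OF F trivialises_ob[OF t]] .
  fix V assume V: "V \<in> Q_above U'"
  show "arr (Phi U) (snd (PhiR U U') (\<gamma> V)) (pull_ob x U V) (fst (PhiR U U') a)"
    using functor_arr[OF F trivialises_arr[OF t V]] pull_ob_res[OF x U V] by simp
  fix W assume W: "W \<in> Q_above U'" and VW: "V \<subseteq> W"
  show "snd (PhiR U U') (\<gamma> W) = Cmp (Phi U) (snd (PhiR U U') (\<gamma> V)) (pull_arr x U V W)"
    using trivialises_cocycle[OF t V W VW] pull_arr_res[OF x U V W VW]
      functor_comp[OF F pull_arr_arr[OF x U(2) V W VW] trivialises_arr[OF t V]] by simp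
qed

lemma descent_map_id:
  assumes x: "lim_obj Q Phi PhiR x" and U: "U \<in> P" "U \<subseteq> U'"
  shows "descent_map x x U (Q_above U') (\<lambda>V. Idm (Phi U) (pull_ob x U V))"
  unfolding descent_map_def
proof (intro conjI ballI impI)
  fix V assume V: "V \<in> Q_above U'"
  show "arr (Phi U) (Idm (Phi U) (pull_ob x U V)) (pull_ob x U V) (pull_ob x U V)"
    using cat_id[OF category_at[OF U(1)] pull_ob_ob[OF x U(1) Q_above_mono[OF U(2) V]]] .
  fix W assume W: "W \<in> Q_above U'" and VW: "V \<subseteq> W"
  have b: "arr (Phi U) (pull_arr x U V W) (pull_ob x U W) (pull_ob x U V)"
    using pull_arr_arr[OF x U(1) Q_above_mono[OF U(2) V] Q_above_mono[OF U(2) W] VW] .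
  show "Cmp (Phi U) (pull_arr x U V W) (Idm (Phi U) (pull_ob x U W))
      = Cmp (Phi U) (Idm (Phi U) (pull_ob x U V)) (pull_arr x U V W)"
    using cat_idl[OF category_at[OF U(1)] b] cat_idr[OF category_at[OF U(1)] b] by simp
qed

definition glue_pair :: "('o,'m) lobj \<Rightarrow> nat set \<Rightarrow> 'o \<times> (nat set \<Rightarrow> 'm)" where
  "glue_pair x U = (SOME p. trivialises x U (Q_above U) (fst p) (snd p))"

definition glue_ob :: "('o,'m) lobj \<Rightarrow> nat set \<Rightarrow> 'o" where
  "glue_ob x U = fst (glue_pair x U)"

definition glue_cone :: "('o,'m) lobj \<Rightarrow> nat set \<Rightarrow> nat set \<Rightarrow> 'm" where
  "glue_cone x U = snd (glue_pair x U)"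

lemma glue_trivialises:
  assumes "lim_obj Q Phi PhiR x" "U \<in> P"
  shows "trivialises x U (Q_above U) (glue_ob x U) (glue_cone x U)"
proof -
  have "\<exists>p. trivialises x U (Q_above U) (fst p) (snd p)"
    using trivialisable[OF assms] by auto
  from someI_ex[OF this] show ?thesis unfolding glue_ob_def glue_cone_def glue_pair_def .
qed

lemma glue_cone_arr:
  "lim_obj Q Phi PhiR x \<Longrightarrow> U \<in> P \<Longrightarrow> V \<in> Q_above U \<Longrightarrow>
   arr (Phi U) (glue_cone x U V) (pull_ob x U V) (glue_ob x U)"
  using trivialises_arr[OF glue_trivialises] .

definition glue_res :: "('o,'m) lobj \<Rightarrow> nat set \<Rightarrow> nat set \<Rightarrow> 'm" where
  "glue_res x U U' = comparison (Phi U) (Q_above U')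
     (fst (PhiR U U') (glue_ob x U')) (\<lambda>V. snd (PhiR U U') (glue_cone x U' V))
     (glue_ob x U) (glue_cone x U) (\<lambda>V. Idm (Phi U) (pull_ob x U V))"

lemma glue_res:
  assumes x: "lim_obj Q Phi PhiR x" and U: "U \<in> P" "U' \<in> P" "U \<subseteq> U'"
  shows "arr (Phi U) (glue_res x U U') (fst (PhiR U U') (glue_ob x U')) (glue_ob x U)"
    and "V \<in> Q_above U' \<Longrightarrow>
      Cmp (Phi U) (glue_res x U U') (snd (PhiR U U') (glue_cone x U' V)) = glue_cone x U V"
proof -
  have ty: "trivialises x U (Q_above U') (glue_ob x U) (glue_cone x U)"
    using trivialises_subset[OF glue_trivialises[OF x U(1)]] Q_above_mono[OF U(3)] by blast
  note cmp = comparison_at[OF x x U trivialises_res[OF x U glue_trivialises[OF x U(2)]] ty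
      descent_map_id[OF x U(1,3)], folded glue_res_def]
  show "arr (Phi U) (glue_res x U U') (fst (PhiR U U') (glue_ob x U')) (glue_ob x U)" using cmp(1) .
  show "V \<in> Q_above U' \<Longrightarrow>
      Cmp (Phi U) (glue_res x U U') (snd (PhiR U U') (glue_cone x U' V)) = glue_cone x U V"
    using cmp(2) cat_idr[OF category_at[OF U(1)] trivialises_arr[OF ty]] by simp
qed

lemma glue_res_unique:
  assumes x: "lim_obj Q Phi PhiR x" and U: "U \<in> P" "U' \<in> P" "U \<subseteq> U'"
    and h: "arr (Phi U) h (fst (PhiR U U') (glue_ob x U')) (glue_ob x U)"
      "\<And>V. V \<in> Q_above U' \<Longrightarrow> Cmp (Phi U) h (snd (PhiR U U') (glue_cone x U' V)) = glue_cone x U V"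
  shows "glue_res x U U' = h"
  unfolding glue_res_def
  using comparison_unique_at[OF U(1,2) trivialises_res[OF x U glue_trivialises[OF x U(2)]] h(1)]
    h(2) cat_idr[OF category_at[OF U(1)] glue_cone_arr[OF x U(1) Q_above_mono[OF U(3)]]] by simp

lemma glue_res_id:
  assumes x: "lim_obj Q Phi PhiR x" and U: "U \<in> P"
  shows "glue_res x U U = Idm (Phi U) (glue_ob x U)"
proof (rule glue_res_unique[OF x U U order_refl])
  have a: "glue_ob x U \<in> Ob (Phi U)" using trivialises_ob[OF glue_trivialises[OF x U]] .
  show "arr (Phi U) (Idm (Phi U) (glue_ob x U)) (fst (PhiR U U) (glue_ob x U)) (glue_ob x U)"
    using res_id_ob[OF U a] cat_id[OF category_at[OF U] a] by simp
  fix V assume V: "V \<in> Q_above U"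
  show "Cmp (Phi U) (Idm (Phi U) (glue_ob x U)) (snd (PhiR U U) (glue_cone x U V)) = glue_cone x U V"
    using res_id_arr[OF U glue_cone_arr[OF x U V]] cat_idl[OF category_at[OF U] glue_cone_arr[OF x U V]]
    by simp
qed

lemma glue_res_cocycle:
  assumes x: "lim_obj Q Phi PhiR x" and U: "U \<in> P" and V: "V \<in> P" and W: "W \<in> P"
    and UV: "U \<subseteq> V" and VW: "V \<subseteq> W"
  shows "glue_res x U W = Cmp (Phi U) (glue_res x U V) (snd (PhiR U V) (glue_res x V W))"
proof (rule glue_res_unique[OF x U W order_trans[OF UV VW]])
  have c: "category (Phi U)" using category_at[OF U] .
  have FV: "is_functor (Phi V) (Phi U) (PhiR U V)" using res_functor[OF U V UV] .
  have aVW: "arr (Phi V) (glue_res x V W) (fst (PhiR V W) (glue_ob x W)) (glue_ob x V)"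
    using glue_res(1)[OF x V W VW] .
  have PaVW: "arr (Phi U) (snd (PhiR U V) (glue_res x V W))
      (fst (PhiR U V) (fst (PhiR V W) (glue_ob x W))) (fst (PhiR U V) (glue_ob x V))"
    using functor_arr[OF FV aVW] .
  have gW: "glue_ob x W \<in> Ob (Phi W)" using trivialises_ob[OF glue_trivialises[OF x W]] .
  show "arr (Phi U) (Cmp (Phi U) (glue_res x U V) (snd (PhiR U V) (glue_res x V W)))
      (fst (PhiR U W) (glue_ob x W)) (glue_ob x U)"
    unfolding res_comp_ob[OF U V W UV VW gW] using cat_comp[OF c PaVW glue_res(1)[OF x U V UV]] .
  fix X assume X: "X \<in> Q_above W"
  have gX: "arr (Phi W) (glue_cone x W X) (pull_ob x W X) (glue_ob x W)"
    using glue_cone_arr[OF x W X] .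
  have PgX: "arr (Phi V) (snd (PhiR V W) (glue_cone x W X))
      (fst (PhiR V W) (pull_ob x W X)) (fst (PhiR V W) (glue_ob x W))"
    using functor_arr[OF res_functor[OF V W VW] gX] .
  have "Cmp (Phi U) (Cmp (Phi U) (glue_res x U V) (snd (PhiR U V) (glue_res x V W)))
          (snd (PhiR U W) (glue_cone x W X))
      = Cmp (Phi U) (glue_res x U V)
          (Cmp (Phi U) (snd (PhiR U V) (glue_res x V W))
            (snd (PhiR U V) (snd (PhiR V W) (glue_cone x W X))))"
    unfolding res_comp_arr[OF U V W UV VW gX]
    using cat_assoc[OF c functor_arr[OF FV PgX] PaVW glue_res(1)[OF x U V UV]] by (rule sym)
  also have "\<dots> = Cmp (Phi U) (glue_res x U V)
      (snd (PhiR U V) (Cmp (Phi V) (glue_res x V W) (snd (PhiR V W) (glue_cone x W X))))"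
    unfolding functor_comp[OF FV PgX aVW] ..
  also have "\<dots> = glue_cone x U X"
    unfolding glue_res(2)[OF x V W VW X] using glue_res(2)[OF x U V UV Q_above_mono[OF VW X]] .
  finally show "Cmp (Phi U) (Cmp (Phi U) (glue_res x U V) (snd (PhiR U V) (glue_res x V W)))
      (snd (PhiR U W) (glue_cone x W X)) = glue_cone x U X" .
qed

definition glue :: "('o,'m) lobj \<Rightarrow> ('o,'m) lobj" where
  "glue x = (\<lambda>U. if U \<in> P then glue_ob x U else undefined,
             \<lambda>U U'. if U \<in> P \<and> U' \<in> P \<and> U \<subseteq> U' then glue_res x U U' else undefined)"

lemma glue_simps:
  "fst (glue x) U = (if U \<in> P then glue_ob x U else undefined)"
  "snd (glue x) U U' = (if U \<in> P \<and> U' \<in> P \<and> U \<subseteq> U' then glue_res x U U' else undefined)"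
  by (simp_all add: glue_def)

lemma lim_obj_glue:
  assumes x: "lim_obj Q Phi PhiR x" shows "lim_obj P Phi PhiR (glue x)"
proof (rule lim_objI)
  fix U assume "U \<in> P" then show "fst (glue x) U \<in> Ob (Phi U)"
    using trivialises_ob[OF glue_trivialises[OF x]] by (simp add: glue_simps)
next
  fix U V assume "U \<in> P" "V \<in> P" "U \<subseteq> V"
  then show "arr (Phi U) (snd (glue x) U V) (fst (PhiR U V) (fst (glue x) V)) (fst (glue x) U)"
    using glue_res(1)[OF x] by (simp add: glue_simps)
next
  fix U assume "U \<in> P" then show "snd (glue x) U U = Idm (Phi U) (fst (glue x) U)"
    using glue_res_id[OF x] by (simp add: glue_simps)
next
  fix U V W assume UVW: "U \<in> P" "V \<in> P" "W \<in> P" "U \<subseteq> V" "V \<subseteq> W"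
  then show "snd (glue x) U W = Cmp (Phi U) (snd (glue x) U V) (snd (PhiR U V) (snd (glue x) V W))"
    using glue_res_cocycle[OF x UVW] order_trans[OF UVW(4,5)] by (simp add: glue_simps)
next
  fix U assume "U \<notin> P" then show "fst (glue x) U = undefined" by (simp add: glue_simps)
next
  fix U V assume "\<not> (U \<in> P \<and> V \<in> P \<and> U \<subseteq> V)"
  then show "snd (glue x) U V = undefined" by (simp only: glue_simps if_False)
qed

definition pull_map :: "('o,'m) larr \<Rightarrow> nat set \<Rightarrow> nat set \<Rightarrow> 'm" where
  "pull_map f U V = snd (PhiR U V) (snd (snd f) V)"

lemma pull_map_arr:
  assumes f: "lim_arr Q Phi PhiR f" and U: "U \<in> P" and V: "V \<in> Q_above U"
  shows "arr (Phi U) (pull_map f U V) (pull_ob (fst f) U V) (pull_ob (fst (snd f)) U V)"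
  using Q_above_P[OF U V] functor_arr[OF res_functor[OF U] Q.lim_arr_arr[OF f]]
  unfolding pull_map_def pull_ob_def by blast

lemma pull_map_res:
  assumes f: "lim_arr Q Phi PhiR f" and U: "U \<in> P" "U' \<in> P" "U \<subseteq> U'" and V: "V \<in> Q_above U'"
  shows "snd (PhiR U U') (pull_map f U' V) = pull_map f U V"
  using Q_above_P[OF U(2) V] res_comp_arr[OF U(1,2) _ U(3) _ Q.lim_arr_arr[OF f]]
  unfolding pull_map_def by simp

lemma descent_map_pull_map:
  assumes f: "lim_arr Q Phi PhiR f" and U: "U \<in> P"
  shows "descent_map (fst f) (fst (snd f)) U (Q_above U) (pull_map f U)"
  unfolding descent_map_def
proof (intro conjI ballI impI pull_map_arr[OF f U])
  fix V W assume V: "V \<in> Q_above U" and W: "W \<in> Q_above U" and VW: "V \<subseteq> W"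
  have v: "U \<subseteq> V" "V \<in> P" "V \<in> Q" and w: "W \<in> P" "W \<in> Q" using Q_above_P[OF U V] Q_above_P[OF U W] by auto
  have F: "is_functor (Phi V) (Phi U) (PhiR U V)" using res_functor[OF U v(2) v(1)] .
  have pW: "arr (Phi W) (snd (snd f) W) (fst (fst f) W) (fst (fst (snd f)) W)"
    and pV: "arr (Phi V) (snd (snd f) V) (fst (fst f) V) (fst (fst (snd f)) V)"
    using Q.lim_arr_arr[OF f w(2)] Q.lim_arr_arr[OF f v(3)] .
  have ay: "arr (Phi V) (snd (fst (snd f)) V W)
      (fst (PhiR V W) (fst (fst (snd f)) W)) (fst (fst (snd f)) V)"
    and ax: "arr (Phi V) (snd (fst f) V W) (fst (PhiR V W) (fst (fst f) W)) (fst (fst f) V)"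
    using Q.lim_obj_arr[OF Q.lim_arr_cod[OF f] v(3) w(2) VW]
      Q.lim_obj_arr[OF Q.lim_arr_dom[OF f] v(3) w(2) VW] .
  have PpW: "arr (Phi V) (snd (PhiR V W) (snd (snd f) W))
      (fst (PhiR V W) (fst (fst f) W)) (fst (PhiR V W) (fst (fst (snd f)) W))"
    using functor_arr[OF res_functor[OF v(2) w(1) VW] pW] .
  have "Cmp (Phi U) (pull_arr (fst (snd f)) U V W) (pull_map f U W)
      = snd (PhiR U V) (Cmp (Phi V) (snd (fst (snd f)) V W) (snd (PhiR V W) (snd (snd f) W)))"
    unfolding pull_arr_def pull_map_def res_comp_arr[OF U v(2) w(1) v(1) VW pW]
    using functor_comp[OF F PpW ay] by simp
  also have "\<dots> = snd (PhiR U V) (Cmp (Phi V) (snd (snd f) V) (snd (fst f) V W))"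
    using Q.lim_arr_nat[OF f v(3) w(2) VW] by simp
  also have "\<dots> = Cmp (Phi U) (pull_map f U V) (pull_arr (fst f) U V W)"
    unfolding pull_arr_def pull_map_def using functor_comp[OF F ax pV] .
  finally show "Cmp (Phi U) (pull_arr (fst (snd f)) U V W) (pull_map f U W)
      = Cmp (Phi U) (pull_map f U V) (pull_arr (fst f) U V W)" .
qed

definition glue_map :: "('o,'m) larr \<Rightarrow> nat set \<Rightarrow> 'm" where
  "glue_map f U = comparison (Phi U) (Q_above U)
     (glue_ob (fst f) U) (glue_cone (fst f) U) (glue_ob (fst (snd f)) U) (glue_cone (fst (snd f)) U)
     (pull_map f U)"

lemma glue_map:
  assumes f: "lim_arr Q Phi PhiR f" and U: "U \<in> P"
  shows "arr (Phi U) (glue_map f U) (glue_ob (fst f) U) (glue_ob (fst (snd f)) U)"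
    and "V \<in> Q_above U \<Longrightarrow>
      Cmp (Phi U) (glue_map f U) (glue_cone (fst f) U V)
        = Cmp (Phi U) (glue_cone (fst (snd f)) U V) (pull_map f U V)"
  using comparison_at[OF Q.lim_arr_dom[OF f] Q.lim_arr_cod[OF f] U U order_refl
      glue_trivialises[OF Q.lim_arr_dom[OF f] U] glue_trivialises[OF Q.lim_arr_cod[OF f] U]
      descent_map_pull_map[OF f U], folded glue_map_def] by blast+

lemma glue_map_unique:
  assumes f: "lim_arr Q Phi PhiR f" and U: "U \<in> P"
    and h: "arr (Phi U) h (glue_ob (fst f) U) (glue_ob (fst (snd f)) U)"
      "\<And>V. V \<in> Q_above U \<Longrightarrow>
        Cmp (Phi U) h (glue_cone (fst f) U V) = Cmp (Phi U) (glue_cone (fst (snd f)) U V) (pull_map f U V)"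
  shows "glue_map f U = h"
  unfolding glue_map_def
  using comparison_unique_at[OF U U glue_trivialises[OF Q.lim_arr_dom[OF f] U] h] .

lemma glue_map_natural:
  assumes f: "lim_arr Q Phi PhiR f" and U: "U \<in> P" "U' \<in> P" "U \<subseteq> U'"
  defines "x \<equiv> fst f" and "y \<equiv> fst (snd f)"
  shows "Cmp (Phi U) (glue_map f U) (glue_res x U U')
       = Cmp (Phi U) (glue_res y U U') (snd (PhiR U U') (glue_map f U'))"
proof -
  have x: "lim_obj Q Phi PhiR x" and y: "lim_obj Q Phi PhiR y"
    using Q.lim_arr_dom[OF f] Q.lim_arr_cod[OF f] unfolding x_def y_def .
  have c: "category (Phi U)" using category_at[OF U(1)] .
  have F: "is_functor (Phi U') (Phi U) (PhiR U U')" using res_functor[OF U] .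
  have gm: "arr (Phi U) (glue_map f U) (glue_ob x U) (glue_ob y U)"
    and gm': "arr (Phi U') (glue_map f U') (glue_ob x U') (glue_ob y U')"
    using glue_map(1)[OF f U(1)] glue_map(1)[OF f U(2)] unfolding x_def y_def .
  have rx: "arr (Phi U) (glue_res x U U') (fst (PhiR U U') (glue_ob x U')) (glue_ob x U)"
    and ry: "arr (Phi U) (glue_res y U U') (fst (PhiR U U') (glue_ob y U')) (glue_ob y U)"
    using glue_res(1)[OF x U] glue_res(1)[OF y U] .
  note tx = trivialises_res[OF x U glue_trivialises[OF x U(2)]]
  show ?thesis
  proof (rule trivialises_arr_ext[OF U(1,2) tx cat_comp[OF c rx gm]
        cat_comp[OF c functor_arr[OF F gm'] ry]])
    fix V assume V: "V \<in> Q_above U'"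
    have gx: "arr (Phi U') (glue_cone x U' V) (pull_ob x U' V) (glue_ob x U')"
      and gy: "arr (Phi U') (glue_cone y U' V) (pull_ob y U' V) (glue_ob y U')"
      using glue_cone_arr[OF x U(2) V] glue_cone_arr[OF y U(2) V] .
    have pm: "arr (Phi U') (pull_map f U' V) (pull_ob x U' V) (pull_ob y U' V)"
      using pull_map_arr[OF f U(2) V] unfolding x_def y_def .
    have "Cmp (Phi U) (Cmp (Phi U) (glue_map f U) (glue_res x U U')) (snd (PhiR U U') (glue_cone x U' V))
        = Cmp (Phi U) (glue_cone y U V) (pull_map f U V)"
      using cat_assoc[OF c trivialises_arr[OF tx V] rx gm] glue_res(2)[OF x U V]
        glue_map(2)[OF f U(1) Q_above_mono[OF U(3) V]] unfolding x_def y_def by simp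
    also have "\<dots> = Cmp (Phi U) (glue_res y U U')
        (Cmp (Phi U) (snd (PhiR U U') (glue_cone y U' V)) (pull_map f U V))"
      using cat_assoc[OF c functor_arr[OF F pm] functor_arr[OF F gy] ry] glue_res(2)[OF y U V]
        pull_map_res[OF f U V] by simp
    also have "\<dots> = Cmp (Phi U) (glue_res y U U')
        (snd (PhiR U U') (Cmp (Phi U') (glue_map f U') (glue_cone x U' V)))"
      using glue_map(2)[OF f U(2) V] functor_comp[OF F pm gy] pull_map_res[OF f U V]
      unfolding x_def y_def by simp
    also have "\<dots> = Cmp (Phi U) (Cmp (Phi U) (glue_res y U U') (snd (PhiR U U') (glue_map f U')))
        (snd (PhiR U U') (glue_cone x U' V))"
      using cat_assoc[OF c functor_arr[OF F gx] functor_arr[OF F gm'] ry] functor_comp[OF F gx gm'] by simp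
    finally show "Cmp (Phi U) (Cmp (Phi U) (glue_map f U) (glue_res x U U'))
        (snd (PhiR U U') (glue_cone x U' V))
        = Cmp (Phi U) (Cmp (Phi U) (glue_res y U U') (snd (PhiR U U') (glue_map f U')))
          (snd (PhiR U U') (glue_cone x U' V))" .
  qed
qed

definition glue_arr :: "('o,'m) larr \<Rightarrow> ('o,'m) larr" where
  "glue_arr f = (glue (fst f), glue (fst (snd f)), \<lambda>U. if U \<in> P then glue_map f U else undefined)"

lemma lim_arr_glue_arr:
  assumes f: "lim_arr Q Phi PhiR f" shows "lim_arr P Phi PhiR (glue_arr f)"
  using lim_obj_glue[OF Q.lim_arr_dom[OF f]] lim_obj_glue[OF Q.lim_arr_cod[OF f]]
    glue_map(1)[OF f] glue_map_natural[OF f]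
  by (intro lim_arrI) (auto simp: glue_arr_def glue_simps)

abbreviation "Lim\<^sub>P \<equiv> twolim P Phi PhiR"
abbreviation "Lim\<^sub>Q \<equiv> twolim Q Phi PhiR"

lemma pull_map_comp:
  assumes f: "lim_arr Q Phi PhiR f" and g: "lim_arr Q Phi PhiR g" and e: "fst (snd f) = fst g"
    and U: "U \<in> P" and V: "V \<in> Q_above U"
  shows "pull_map (Cmp Lim\<^sub>Q g f) U V = Cmp (Phi U) (pull_map g U V) (pull_map f U V)"
proof -
  have v: "U \<subseteq> V" "V \<in> P" "V \<in> Q" using Q_above_P[OF U V] by auto
  have "arr (Phi V) (snd (snd f) V) (fst (fst f) V) (fst (fst g) V)"
    using Q.lim_arr_arr[OF f v(3)] e by simp
  then show ?thesis
    using functor_comp[OF res_functor[OF U v(2) v(1)] _ Q.lim_arr_arr[OF g v(3)]] v(3)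
    unfolding pull_map_def by (simp add: Q.twolim_simps)
qed

lemma pull_map_id:
  assumes x: "lim_obj Q Phi PhiR x" and U: "U \<in> P" and V: "V \<in> Q_above U"
  shows "pull_map (Idm Lim\<^sub>Q x) U V = Idm (Phi U) (pull_ob x U V)"
proof -
  have v: "U \<subseteq> V" "V \<in> P" "V \<in> Q" using Q_above_P[OF U V] by auto
  show ?thesis
    using functor_id[OF res_functor[OF U v(2) v(1)] Q.lim_obj_ob[OF x v(3)]] v(3)
    unfolding pull_map_def pull_ob_def by (simp add: Q.twolim_simps)
qed

lemma glue_map_comp:
  assumes f: "lim_arr Q Phi PhiR f" and g: "lim_arr Q Phi PhiR g" and e: "fst (snd f) = fst g"
    and U: "U \<in> P"
  shows "glue_map (Cmp Lim\<^sub>Q g f) U = Cmp (Phi U) (glue_map g U) (glue_map f U)"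
proof (rule glue_map_unique[OF Q.lim_arr_comp[OF f g e] U])
  have c: "category (Phi U)" using category_at[OF U] .
  have a1: "arr (Phi U) (glue_map f U) (glue_ob (fst f) U) (glue_ob (fst g) U)"
    using glue_map(1)[OF f U] e by simp
  have a2: "arr (Phi U) (glue_map g U) (glue_ob (fst g) U) (glue_ob (fst (snd g)) U)"
    using glue_map(1)[OF g U] .
  show "arr (Phi U) (Cmp (Phi U) (glue_map g U) (glue_map f U))
      (glue_ob (fst (Cmp Lim\<^sub>Q g f)) U) (glue_ob (fst (snd (Cmp Lim\<^sub>Q g f))) U)"
    using cat_comp[OF c a1 a2] by (simp add: Q.twolim_simps)
  fix V assume V: "V \<in> Q_above U"
  have pf: "arr (Phi U) (pull_map f U V) (pull_ob (fst f) U V) (pull_ob (fst g) U V)"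
    using pull_map_arr[OF f U V] e by simp
  have pg: "arr (Phi U) (pull_map g U V) (pull_ob (fst g) U V) (pull_ob (fst (snd g)) U V)"
    using pull_map_arr[OF g U V] .
  have gx: "arr (Phi U) (glue_cone (fst f) U V) (pull_ob (fst f) U V) (glue_ob (fst f) U)"
    and gy: "arr (Phi U) (glue_cone (fst g) U V) (pull_ob (fst g) U V) (glue_ob (fst g) U)"
    and gz: "arr (Phi U) (glue_cone (fst (snd g)) U V)
      (pull_ob (fst (snd g)) U V) (glue_ob (fst (snd g)) U)"
    using glue_cone_arr[OF Q.lim_arr_dom[OF f] U V] glue_cone_arr[OF Q.lim_arr_dom[OF g] U V]
      glue_cone_arr[OF Q.lim_arr_cod[OF g] U V] .
  have "Cmp (Phi U) (Cmp (Phi U) (glue_map g U) (glue_map f U)) (glue_cone (fst f) U V)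
      = Cmp (Phi U) (Cmp (Phi U) (glue_map g U) (glue_cone (fst g) U V)) (pull_map f U V)"
    using cat_assoc[OF c gx a1 a2] cat_assoc[OF c pf gy a2] glue_map(2)[OF f U V] e by simp
  also have "\<dots> = Cmp (Phi U) (glue_cone (fst (snd g)) U V) (pull_map (Cmp Lim\<^sub>Q g f) U V)"
    using cat_assoc[OF c pf pg gz] glue_map(2)[OF g U V] pull_map_comp[OF f g e U V] by simp
  finally show "Cmp (Phi U) (Cmp (Phi U) (glue_map g U) (glue_map f U))
      (glue_cone (fst (Cmp Lim\<^sub>Q g f)) U V)
      = Cmp (Phi U) (glue_cone (fst (snd (Cmp Lim\<^sub>Q g f))) U V) (pull_map (Cmp Lim\<^sub>Q g f) U V)"
    by (simp add: Q.twolim_simps)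
qed

lemma glue_map_id:
  assumes x: "lim_obj Q Phi PhiR x" and U: "U \<in> P"
  shows "glue_map (Idm Lim\<^sub>Q x) U = Idm (Phi U) (glue_ob x U)"
proof (rule glue_map_unique[OF Q.lim_arr_id[OF x] U])
  have c: "category (Phi U)" using category_at[OF U] .
  show "arr (Phi U) (Idm (Phi U) (glue_ob x U))
      (glue_ob (fst (Idm Lim\<^sub>Q x)) U) (glue_ob (fst (snd (Idm Lim\<^sub>Q x))) U)"
    using cat_id[OF c trivialises_ob[OF glue_trivialises[OF x U]]] by (simp add: Q.twolim_simps)
  fix V assume V: "V \<in> Q_above U"
  show "Cmp (Phi U) (Idm (Phi U) (glue_ob x U)) (glue_cone (fst (Idm Lim\<^sub>Q x)) U V) =
      Cmp (Phi U) (glue_cone (fst (snd (Idm Lim\<^sub>Q x))) U V) (pull_map (Idm Lim\<^sub>Q x) U V)"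
    using cat_idl[OF c glue_cone_arr[OF x U V]] cat_idr[OF c glue_cone_arr[OF x U V]] pull_map_id[OF x U V]
    by (simp add: Q.twolim_simps)
qed

abbreviation "Glue \<equiv> (glue, glue_arr)"

lemma glue_functor: "is_functor Lim\<^sub>Q Lim\<^sub>P Glue"
  unfolding is_functor_def
proof (intro conjI ballI impI)
  show "category Lim\<^sub>Q" "category Lim\<^sub>P" using Q.twolim_category twolim_category .
  fix x assume "x \<in> Ob Lim\<^sub>Q"
  then have x: "lim_obj Q Phi PhiR x" by (simp add: Q.twolim_simps)
  show "fst Glue x \<in> Ob Lim\<^sub>P" using lim_obj_glue[OF x] by (simp add: twolim_simps)
  show "snd Glue (Idm Lim\<^sub>Q x) = Idm Lim\<^sub>P (fst Glue x)"
    using glue_map_id[OF x] by (auto simp: twolim_simps Q.twolim_simps glue_arr_def glue_simps intro!: ext)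
next
  fix f assume "f \<in> Ar Lim\<^sub>Q"
  then have f: "lim_arr Q Phi PhiR f" by (simp add: Q.twolim_simps)
  show "snd Glue f \<in> Ar Lim\<^sub>P" "Dom Lim\<^sub>P (snd Glue f) = fst Glue (Dom Lim\<^sub>Q f)"
    "Cod Lim\<^sub>P (snd Glue f) = fst Glue (Cod Lim\<^sub>Q f)"
    using lim_arr_glue_arr[OF f] by (simp_all add: twolim_simps Q.twolim_simps glue_arr_def)
  fix g assume "g \<in> Ar Lim\<^sub>Q" "Cod Lim\<^sub>Q f = Dom Lim\<^sub>Q g"
  then have g: "lim_arr Q Phi PhiR g" and e: "fst (snd f) = fst g" by (simp_all add: Q.twolim_simps)
  show "snd Glue (Cmp Lim\<^sub>Q g f) = Cmp Lim\<^sub>P (snd Glue g) (snd Glue f)"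
    using glue_map_comp[OF f g e] by (auto simp: twolim_simps Q.twolim_simps glue_arr_def intro!: ext)
qed

end

section \<open>The unit and counit\<close>

context boolean_gpd_presheaf
begin

lemma lim_obj_restr_Q: "lim_obj P Phi PhiR y \<Longrightarrow> lim_obj Q Phi PhiR (restr_obj Q y)"
  using lim_obj_restr[OF Q_subset_P] .

lemma trivialises_restr:
  assumes y: "lim_obj P Phi PhiR y" and U: "U \<in> P"
  shows "trivialises (restr_obj Q y) U (Q_above U) (fst y U) (snd y U)"
  unfolding trivialises_def
proof (intro conjI ballI impI)
  show "fst y U \<in> Ob (Phi U)" using lim_obj_ob[OF y U] .
  fix V assume V: "V \<in> Q_above U"
  have v: "U \<subseteq> V" "V \<in> P" "V \<in> Q" using Q_above_P[OF U V] by auto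
  show "arr (Phi U) (snd y U V) (pull_ob (restr_obj Q y) U V) (fst y U)"
    using lim_obj_arr[OF y U v(2) v(1)] v(3) by (simp add: pull_ob_def restr_simps)
  fix W assume W: "W \<in> Q_above U" and VW: "V \<subseteq> W"
  have w: "W \<in> P" "W \<in> Q" using Q_above_P[OF U W] by auto
  show "snd y U W = Cmp (Phi U) (snd y U V) (pull_arr (restr_obj Q y) U V W)"
    using lim_obj_cocycle[OF y U v(2) w(1) v(1) VW] v(3) w(2) VW by (simp add: pull_arr_def restr_simps)
qed

lemma trivialises_self:
  assumes x: "lim_obj Q Phi PhiR x" and U: "U \<in> Q"
  shows "trivialises x U (Q_above U) (fst x U) (snd x U)"
  unfolding trivialises_def
proof (intro conjI ballI impI)
  show "fst x U \<in> Ob (Phi U)" using Q.lim_obj_ob[OF x U] .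
  fix V assume V: "V \<in> Q_above U"
  have v: "U \<subseteq> V" "V \<in> Q" using V Q_above_iff by auto
  show "arr (Phi U) (snd x U V) (pull_ob x U V) (fst x U)"
    using Q.lim_obj_arr[OF x U v(2) v(1)] by (simp add: pull_ob_def)
  fix W assume W: "W \<in> Q_above U" and VW: "V \<subseteq> W"
  show "snd x U W = Cmp (Phi U) (snd x U V) (pull_arr x U V W)"
    using Q.lim_obj_cocycle[OF x U v(2) _ v(1) VW] W by (simp add: pull_arr_def Q_above_iff)
qed

definition unit_component :: "('o,'m) lobj \<Rightarrow> nat set \<Rightarrow> 'm" where
  "unit_component y U = comparison (Phi U) (Q_above U) (fst y U) (snd y U)
     (glue_ob (restr_obj Q y) U) (glue_cone (restr_obj Q y) U)
     (\<lambda>V. Idm (Phi U) (pull_ob (restr_obj Q y) U V))"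

lemma unit_component:
  assumes y: "lim_obj P Phi PhiR y" and U: "U \<in> P"
  shows "arr (Phi U) (unit_component y U) (fst y U) (glue_ob (restr_obj Q y) U)"
    and "V \<in> Q_above U \<Longrightarrow> Cmp (Phi U) (unit_component y U) (snd y U V) = glue_cone (restr_obj Q y) U V"
proof -
  note r = lim_obj_restr_Q[OF y]
  note cmp = comparison_at[OF r r U U order_refl trivialises_restr[OF y U] glue_trivialises[OF r U]
      descent_map_id[OF r U order_refl], folded unit_component_def]
  show "arr (Phi U) (unit_component y U) (fst y U) (glue_ob (restr_obj Q y) U)" using cmp(1) .
  show "V \<in> Q_above U \<Longrightarrow> Cmp (Phi U) (unit_component y U) (snd y U V) = glue_cone (restr_obj Q y) U V"
    using cmp(2) cat_idr[OF category_at[OF U] glue_cone_arr[OF r U]] by simp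
qed

lemma unit_component_compatible:
  assumes y: "lim_obj P Phi PhiR y" and U: "U \<in> P" "U' \<in> P" "U \<subseteq> U'"
  defines "r \<equiv> restr_obj Q y"
  shows "Cmp (Phi U) (unit_component y U) (snd y U U')
       = Cmp (Phi U) (glue_res r U U') (snd (PhiR U U') (unit_component y U'))"
proof -
  have r: "lim_obj Q Phi PhiR r" using lim_obj_restr_Q[OF y] r_def by simp
  have c: "category (Phi U)" using category_at[OF U(1)] .
  have F: "is_functor (Phi U') (Phi U) (PhiR U U')" using res_functor[OF U] .
  have e: "arr (Phi U) (unit_component y U) (fst y U) (glue_ob r U)"
    and e': "arr (Phi U') (unit_component y U') (fst y U') (glue_ob r U')"
    using unit_component(1)[OF y U(1)] unit_component(1)[OF y U(2)] unfolding r_def .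
  have \<alpha>: "arr (Phi U) (snd y U U') (fst (PhiR U U') (fst y U')) (fst y U)" using lim_obj_arr[OF y U] .
  note ty = trivialises_res[OF r U trivialises_restr[OF y U(2), folded r_def]]
  show ?thesis
  proof (rule trivialises_arr_ext[OF U(1,2) ty cat_comp[OF c \<alpha> e]
        cat_comp[OF c functor_arr[OF F e'] glue_res(1)[OF r U]]])
    fix W assume W: "W \<in> Q_above U'"
    have w: "U' \<subseteq> W" "W \<in> P" using Q_above_P[OF U(2) W] by auto
    have yW: "arr (Phi U') (snd y U' W) (pull_ob r U' W) (fst y U')"
      using trivialises_arr[OF trivialises_restr[OF y U(2)] W] unfolding r_def .
    have "Cmp (Phi U) (Cmp (Phi U) (unit_component y U) (snd y U U')) (snd (PhiR U U') (snd y U' W))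
        = glue_cone r U W"
      using cat_assoc[OF c trivialises_arr[OF ty W] \<alpha> e] lim_obj_cocycle[OF y U(1,2) w(2) U(3) w(1)]
        unit_component(2)[OF y U(1) Q_above_mono[OF U(3) W]] unfolding r_def by simp
    also have "\<dots> = Cmp (Phi U) (Cmp (Phi U) (glue_res r U U') (snd (PhiR U U') (unit_component y U')))
        (snd (PhiR U U') (snd y U' W))"
      using cat_assoc[OF c functor_arr[OF F yW] functor_arr[OF F e'] glue_res(1)[OF r U]]
        functor_comp[OF F yW e'] unit_component(2)[OF y U(2) W] glue_res(2)[OF r U W]
      unfolding r_def by simp
    finally show "Cmp (Phi U) (Cmp (Phi U) (unit_component y U) (snd y U U')) (snd (PhiR U U') (snd y U' W))
        = Cmp (Phi U) (Cmp (Phi U) (glue_res r U U') (snd (PhiR U U') (unit_component y U')))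
          (snd (PhiR U U') (snd y U' W))" .
  qed
qed

definition unit :: "('o,'m) lobj \<Rightarrow> ('o,'m) larr" where
  "unit y = (y, glue (restr_obj Q y), \<lambda>U. if U \<in> P then unit_component y U else undefined)"

lemma lim_arr_unit:
  assumes y: "lim_obj P Phi PhiR y" shows "lim_arr P Phi PhiR (unit y)"
  using y lim_obj_glue[OF lim_obj_restr_Q[OF y]] unit_component(1)[OF y] unit_component_compatible[OF y]
  by (intro lim_arrI) (auto simp: unit_def glue_simps)

lemma unit_natural:
  assumes f: "lim_arr P Phi PhiR f" and U: "U \<in> P"
  defines "y \<equiv> fst f" and "z \<equiv> fst (snd f)" and "p \<equiv> snd (snd f)"
    and "f\<^sub>Q \<equiv> snd (restr_ftor Q) f"
  shows "Cmp (Phi U) (unit_component z U) (p U) = Cmp (Phi U) (glue_map f\<^sub>Q U) (unit_component y U)"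
proof -
  have y: "lim_obj P Phi PhiR y" and z: "lim_obj P Phi PhiR z"
    using lim_arr_dom[OF f] lim_arr_cod[OF f] unfolding y_def z_def .
  have fQ: "lim_arr Q Phi PhiR f\<^sub>Q" using lim_arr_restr[OF Q_subset_P f] unfolding f\<^sub>Q_def .
  have fQ_simps: "fst f\<^sub>Q = restr_obj Q y" "fst (snd f\<^sub>Q) = restr_obj Q z"
    "\<And>V. V \<in> Q \<Longrightarrow> snd (snd f\<^sub>Q) V = p V"
    by (simp_all add: f\<^sub>Q_def y_def z_def p_def restr_simps)
  have c: "category (Phi U)" using category_at[OF U] .
  have pU: "arr (Phi U) (p U) (fst y U) (fst z U)" using lim_arr_arr[OF f U] unfolding y_def z_def p_def .
  have ey: "arr (Phi U) (unit_component y U) (fst y U) (glue_ob (restr_obj Q y) U)"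
    and ez: "arr (Phi U) (unit_component z U) (fst z U) (glue_ob (restr_obj Q z) U)"
    using unit_component(1)[OF y U] unit_component(1)[OF z U] .
  have gm: "arr (Phi U) (glue_map f\<^sub>Q U) (glue_ob (restr_obj Q y) U) (glue_ob (restr_obj Q z) U)"
    using glue_map(1)[OF fQ U] fQ_simps by simp
  note ty = trivialises_restr[OF y U]
  show ?thesis
  proof (rule trivialises_arr_ext[OF U U ty cat_comp[OF c pU ez] cat_comp[OF c ey gm]])
    fix W assume W: "W \<in> Q_above U"
    have w: "U \<subseteq> W" "W \<in> P" "W \<in> Q" using Q_above_P[OF U W] by auto
    have pW: "arr (Phi W) (p W) (fst y W) (fst z W)"
      using lim_arr_arr[OF f w(2)] unfolding y_def z_def p_def .
    have PpW: "arr (Phi U) (snd (PhiR U W) (p W))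
        (pull_ob (restr_obj Q y) U W) (pull_ob (restr_obj Q z) U W)"
      using functor_arr[OF res_functor[OF U w(2) w(1)] pW] w(3) by (simp add: pull_ob_def restr_simps)
    have "Cmp (Phi U) (Cmp (Phi U) (unit_component z U) (p U)) (snd y U W)
        = Cmp (Phi U) (glue_cone (restr_obj Q z) U W) (snd (PhiR U W) (p W))"
      using cat_assoc[OF c trivialises_arr[OF ty W] pU ez] lim_arr_nat[OF f U w(2) w(1)]
        cat_assoc[OF c PpW trivialises_arr[OF trivialises_restr[OF z U] W] ez] unit_component(2)[OF z U W]
      unfolding y_def z_def p_def by simp
    also have "\<dots> = Cmp (Phi U) (Cmp (Phi U) (glue_map f\<^sub>Q U) (unit_component y U)) (snd y U W)"
      using cat_assoc[OF c trivialises_arr[OF ty W] ey gm] unit_component(2)[OF y U W]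
        glue_map(2)[OF fQ U W] fQ_simps w(3) by (simp add: pull_map_def)
    finally show "Cmp (Phi U) (Cmp (Phi U) (unit_component z U) (p U)) (snd y U W)
        = Cmp (Phi U) (Cmp (Phi U) (glue_map f\<^sub>Q U) (unit_component y U)) (snd y U W)" .
  qed
qed

lemma unit_nat_iso: "nat_iso Lim\<^sub>P Lim\<^sub>P id_ftor (comp_ftor Glue (restr_ftor Q)) unit"
proof (rule nat_iso_groupoidI[OF id_ftor_functor[OF twolim_category]
      comp_ftor_functor[OF restr_ftor_functor[OF Q_subset_P] glue_functor] twolim_groupoid])
  fix y assume "y \<in> Ob Lim\<^sub>P"
  then show "arr Lim\<^sub>P (unit y) (fst id_ftor y) (fst (comp_ftor Glue (restr_ftor Q)) y)"
    using lim_arr_unit by (simp add: arr_def twolim_simps unit_def id_ftor_def comp_ftor_def restr_simps)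
next
  fix f assume "f \<in> Ar Lim\<^sub>P"
  then have f: "lim_arr P Phi PhiR f" by (simp add: twolim_simps)
  show "Cmp Lim\<^sub>P (unit (Cod Lim\<^sub>P f)) (snd id_ftor f)
      = Cmp Lim\<^sub>P (snd (comp_ftor Glue (restr_ftor Q)) f) (unit (Dom Lim\<^sub>P f))"
    using unit_natural[OF f] lim_arr_undefined[OF f]
    by (auto simp: twolim_simps unit_def id_ftor_def comp_ftor_def glue_arr_def restr_simps intro!: ext)
qed

definition counit_component :: "('o,'m) lobj \<Rightarrow> nat set \<Rightarrow> 'm" where
  "counit_component x U = comparison (Phi U) (Q_above U) (glue_ob x U) (glue_cone x U)
     (fst x U) (snd x U) (\<lambda>V. Idm (Phi U) (pull_ob x U V))"

lemma counit_component:
  assumes x: "lim_obj Q Phi PhiR x" and U: "U \<in> Q"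
  shows "arr (Phi U) (counit_component x U) (glue_ob x U) (fst x U)"
    and "V \<in> Q_above U \<Longrightarrow> Cmp (Phi U) (counit_component x U) (glue_cone x U V) = snd x U V"
proof -
  have UP: "U \<in> P" using U Q_subset_P by auto
  note cmp = comparison_at[OF x x UP UP order_refl glue_trivialises[OF x UP] trivialises_self[OF x U]
      descent_map_id[OF x UP order_refl], folded counit_component_def]
  show "arr (Phi U) (counit_component x U) (glue_ob x U) (fst x U)" using cmp(1) .
  show "V \<in> Q_above U \<Longrightarrow> Cmp (Phi U) (counit_component x U) (glue_cone x U V) = snd x U V"
    using cmp(2) cat_idr[OF category_at[OF UP] trivialises_arr[OF trivialises_self[OF x U]]] by simp
qed

lemma counit_component_compatible:
  assumes x: "lim_obj Q Phi PhiR x" and U: "U \<in> Q" "U' \<in> Q" "U \<subseteq> U'"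
  shows "Cmp (Phi U) (counit_component x U) (glue_res x U U')
       = Cmp (Phi U) (snd x U U') (snd (PhiR U U') (counit_component x U'))"
proof -
  have UP: "U \<in> P" "U' \<in> P" "U \<subseteq> U'" using U Q_subset_P by auto
  have c: "category (Phi U)" using category_at[OF UP(1)] .
  have F: "is_functor (Phi U') (Phi U) (PhiR U U')" using res_functor[OF UP] .
  have k: "arr (Phi U) (counit_component x U) (glue_ob x U) (fst x U)"
    and k': "arr (Phi U') (counit_component x U') (glue_ob x U') (fst x U')"
    using counit_component(1)[OF x U(1)] counit_component(1)[OF x U(2)] .
  have \<alpha>: "arr (Phi U) (snd x U U') (fst (PhiR U U') (fst x U')) (fst x U)" using Q.lim_obj_arr[OF x U] .
  note tx = trivialises_res[OF x UP glue_trivialises[OF x UP(2)]]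
  show ?thesis
  proof (rule trivialises_arr_ext[OF UP(1,2) tx cat_comp[OF c glue_res(1)[OF x UP] k]
        cat_comp[OF c functor_arr[OF F k'] \<alpha>]])
    fix W assume W: "W \<in> Q_above U'"
    have w: "U' \<subseteq> W" "W \<in> Q" using W Q_above_iff by auto
    have gW: "arr (Phi U') (glue_cone x U' W) (pull_ob x U' W) (glue_ob x U')"
      using glue_cone_arr[OF x UP(2) W] .
    have "Cmp (Phi U) (Cmp (Phi U) (counit_component x U) (glue_res x U U'))
        (snd (PhiR U U') (glue_cone x U' W))
        = snd x U W"
      using cat_assoc[OF c trivialises_arr[OF tx W] glue_res(1)[OF x UP] k] glue_res(2)[OF x UP W]
        counit_component(2)[OF x U(1) Q_above_mono[OF UP(3) W]] by simp
    also have "\<dots> = Cmp (Phi U) (Cmp (Phi U) (snd x U U') (snd (PhiR U U') (counit_component x U')))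
        (snd (PhiR U U') (glue_cone x U' W))"
      using cat_assoc[OF c functor_arr[OF F gW] functor_arr[OF F k'] \<alpha>] functor_comp[OF F gW k']
        counit_component(2)[OF x U(2) W] Q.lim_obj_cocycle[OF x U(1,2) w(2) U(3) w(1)] by simp
    finally show "Cmp (Phi U) (Cmp (Phi U) (counit_component x U) (glue_res x U U'))
        (snd (PhiR U U') (glue_cone x U' W))
      = Cmp (Phi U) (Cmp (Phi U) (snd x U U') (snd (PhiR U U') (counit_component x U')))
        (snd (PhiR U U') (glue_cone x U' W))" .
  qed
qed

definition counit :: "('o,'m) lobj \<Rightarrow> ('o,'m) larr" where
  "counit x = (restr_obj Q (glue x), x, \<lambda>U. if U \<in> Q then counit_component x U else undefined)"

lemma lim_arr_counit:
  assumes x: "lim_obj Q Phi PhiR x" shows "lim_arr Q Phi PhiR (counit x)"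
  using x lim_obj_restr_Q[OF lim_obj_glue[OF x]] counit_component(1)[OF x]
    counit_component_compatible[OF x] Q_subset_P
  by (intro Q.lim_arrI) (auto simp: counit_def glue_simps restr_simps)

lemma counit_natural:
  assumes f: "lim_arr Q Phi PhiR f" and U: "U \<in> Q"
  defines "x \<equiv> fst f" and "x' \<equiv> fst (snd f)" and "p \<equiv> snd (snd f)"
  shows "Cmp (Phi U) (counit_component x' U) (glue_map f U) = Cmp (Phi U) (p U) (counit_component x U)"
proof -
  have x: "lim_obj Q Phi PhiR x" and x': "lim_obj Q Phi PhiR x'"
    using Q.lim_arr_dom[OF f] Q.lim_arr_cod[OF f] unfolding x_def x'_def .
  have UP: "U \<in> P" using U Q_subset_P by auto
  have c: "category (Phi U)" using category_at[OF UP] .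
  have pU: "arr (Phi U) (p U) (fst x U) (fst x' U)"
    using Q.lim_arr_arr[OF f U] unfolding x_def x'_def p_def .
  have k: "arr (Phi U) (counit_component x U) (glue_ob x U) (fst x U)"
    and k': "arr (Phi U) (counit_component x' U) (glue_ob x' U) (fst x' U)"
    using counit_component(1)[OF x U] counit_component(1)[OF x' U] .
  have gm: "arr (Phi U) (glue_map f U) (glue_ob x U) (glue_ob x' U)"
    using glue_map(1)[OF f UP] unfolding x_def x'_def .
  note tx = glue_trivialises[OF x UP]
  show ?thesis
  proof (rule trivialises_arr_ext[OF UP UP tx cat_comp[OF c gm k'] cat_comp[OF c k pU]])
    fix W assume W: "W \<in> Q_above U"
    have w: "U \<subseteq> W" "W \<in> Q" using W Q_above_iff by auto
    have pm: "arr (Phi U) (pull_map f U W) (pull_ob x U W) (pull_ob x' U W)"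
      using pull_map_arr[OF f UP W] unfolding x_def x'_def .
    have "Cmp (Phi U) (Cmp (Phi U) (counit_component x' U) (glue_map f U)) (glue_cone x U W)
        = Cmp (Phi U) (snd x' U W) (pull_map f U W)"
      using cat_assoc[OF c trivialises_arr[OF tx W] gm k'] glue_map(2)[OF f UP W]
        cat_assoc[OF c pm glue_cone_arr[OF x' UP W] k'] counit_component(2)[OF x' U W]
      unfolding x_def x'_def by simp
    also have "\<dots> = Cmp (Phi U) (Cmp (Phi U) (p U) (counit_component x U)) (glue_cone x U W)"
      using cat_assoc[OF c trivialises_arr[OF tx W] k pU] counit_component(2)[OF x U W]
        Q.lim_arr_nat[OF f U w(2) w(1)] unfolding x_def x'_def p_def pull_map_def by simp
    finally show "Cmp (Phi U) (Cmp (Phi U) (counit_component x' U) (glue_map f U)) (glue_cone x U W)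
        = Cmp (Phi U) (Cmp (Phi U) (p U) (counit_component x U)) (glue_cone x U W)" .
  qed
qed

lemma counit_nat_iso: "nat_iso Lim\<^sub>Q Lim\<^sub>Q (comp_ftor (restr_ftor Q) Glue) id_ftor counit"
proof (rule nat_iso_groupoidI[OF comp_ftor_functor[OF glue_functor restr_ftor_functor[OF Q_subset_P]]
      id_ftor_functor[OF Q.twolim_category] Q.twolim_groupoid])
  fix x assume "x \<in> Ob Lim\<^sub>Q"
  then show "arr Lim\<^sub>Q (counit x) (fst (comp_ftor (restr_ftor Q) Glue) x) (fst id_ftor x)"
    using lim_arr_counit by (simp add: arr_def Q.twolim_simps counit_def id_ftor_def comp_ftor_def
        restr_simps)
next
  fix f assume "f \<in> Ar Lim\<^sub>Q"
  then have f: "lim_arr Q Phi PhiR f" by (simp add: Q.twolim_simps)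
  show "Cmp Lim\<^sub>Q (counit (Cod Lim\<^sub>Q f)) (snd (comp_ftor (restr_ftor Q) Glue) f)
      = Cmp Lim\<^sub>Q (snd id_ftor f) (counit (Dom Lim\<^sub>Q f))"
    using counit_natural[OF f] Q.lim_arr_undefined[OF f] Q_subset_P
    by (auto simp: Q.twolim_simps counit_def id_ftor_def comp_ftor_def glue_arr_def restr_simps intro!: ext)
qed

lemma restriction_equivalence: "cat_equivalence Lim\<^sub>P Lim\<^sub>Q (restr_ftor Q)"
  unfolding cat_equivalence_def
  using restr_ftor_functor[OF Q_subset_P] glue_functor unit_nat_iso counit_nat_iso by blast

end

theorem corollary5p2:
  fixes n :: nat
    and Phi :: "nat set \<Rightarrow> ('o,'m) cat"
    and PhiR :: "nat set \<Rightarrow> nat set \<Rightarrow> ('o,'m,'o,'m) ftor"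
  assumes "n \<ge> 3"
    and "contra_gpd_functor (Bn n) Phi PhiR"
  shows "cat_equivalence (twolim (Bn n) Phi PhiR) (twolim (Bnk n (n - 3)) Phi PhiR)
           (restr_ftor (Bnk n (n - 3)))"
proof -
  interpret boolean_gpd_presheaf n Phi PhiR
    using assms by unfold_locales
  show ?thesis using restriction_equivalence .
qed

end
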